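(* Let $\mathsf{X}$ be a finite connected graph with no tails and with $l$ ramified vertices, having a segment decomposition with segments $\mathsf{S}^1,\dots,\mathsf{S}^k$, $\mathsf{S}^i$ having $t_i$ ramified vertices. Let $\mathsf{X}_n$ be the $n$-th layer of a $\mathbb{Z}_p$-cover of $\mathsf{X}$ (given by an arbitrary voltage assignment) such that all ramified vertices are totally ramified, and let $\mathsf{S}^i_n$ be the preimage of $\mathsf{S}^i$ in $\mathsf{X}_n$. Then \[\kappa(\mathsf{X}_n)=\sum_{I\ \text{admissible}}\ \prod_{i\in I}\kappa(\mathsf{S}^i_n)\prod_{i\notin I}F_{t_i}(\mathsf{S}^i_n).\]
   Context: Graphs are finite and undirected, possibly with multiple edges and loops; $\kappa$ = number of spanning trees. Tails, admissible paths, segment decompositions: a tail is an unramified vertex with exactly one neighbour joined by exactly one edge; an admissible path between ramified $v,v'$ has all intermediate vertices unramified. Admissible paths between distinct ramified vertices sharing an edge are grouped together; a decomposition requires each group to join one pair of ramified vertices, and groups give the 2-segments; the remaining edges lie on admissible closed paths at a single ramified vertex outside the 2-segments, grouped likewise into 1-segments; segments are edge-disjoint, share no unramified vertex and cover $\mathsf{X}$. $F_t(\mathsf{S})$ ($t\in\{1,2\}$) is the number of spanning forests of $\mathsf{S}$ with $t$ trees each containing exactly one ramified vertex (in $\mathsf{S}^i_n$ the ramified vertices are the unique preimages of those of $\mathsf{S}^i$). A subset $I$ of the indices of 2-segments with $|I|=l-1$ is admissible if there is a spanning tree $\mathsf{T}$ of $\mathsf{X}$ such that $\mathsf{T}\cap\mathsf{S}^i$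 is a spanning tree of $\mathsf{S}^i$ for all $i\in I$. Tower: $\Gamma\cong\mathbb{Z}_p$, $\Gamma_n=\Gamma/\Gamma^{p^n}$; voltage assignment $\alpha$ from directed edges to $\Gamma$ with $\alpha(\bar e)=\alpha(e)^{-1}$; closed subgroups $I_v$ with $I_v=\Gamma$ for ramified $v$ and $I_v=1$ otherwise; $\mathsf{X}_n$ has vertices $\bigsqcup_v\{v\}\times\Gamma_n/\pi_n(I_v)$ and directed edges $\mathbf{E}(\mathsf{X})\times\Gamma_n$, $(e,g)$ joining $(o(e),g\pi_n(I_{o(e)}))$ to $(t(e),g\pi_n(\alpha(e))\pi_n(I_{t(e)}))$; all $\mathsf{X}_n$ connected. *)

theory Defs
  imports Main "HOL-Computational_Algebra.Primes"
begin

text \<open>Finite undirected multigraphs (loops and multiple edges allowed).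
  A graph is given by a vertex set V, an edge set E and a map ends assigning
  to every edge a chosen orientation (origin, terminus).\<close>

definition graph :: "'v set \<Rightarrow> 'e set \<Rightarrow> ('e \<Rightarrow> 'v \<times> 'v) \<Rightarrow> bool" where
  "graph V E ends \<longleftrightarrow> finite V \<and> finite E \<and>
     (\<forall>e\<in>E. fst (ends e) \<in> V \<and> snd (ends e) \<in> V)"

definition joins :: "('e \<Rightarrow> 'v \<times> 'v) \<Rightarrow> 'e \<Rightarrow> 'v \<Rightarrow> 'v \<Rightarrow> bool" where
  "joins ends e a b \<longleftrightarrow> ends e = (a, b) \<or> ends e = (b, a)"

definition adj :: "('e \<Rightarrow> 'v \<times> 'v) \<Rightarrow> 'e set \<Rightarrow> ('v \<times> 'v) set" where
  "adj ends F = {(a, b). \<exists>e\<in>F. joins ends e a b}"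

definition connected_graph :: "'v set \<Rightarrow> 'e set \<Rightarrow> ('e \<Rightarrow> 'v \<times> 'v) \<Rightarrow> bool" where
  "connected_graph V F ends \<longleftrightarrow> V \<noteq> {} \<and> (\<forall>a\<in>V. \<forall>b\<in>V. (a, b) \<in> (adj ends F)\<^sup>*)"

text \<open>An edge set is acyclic (a forest) iff no edge lies on a cycle, i.e. the ends of
  every edge are not connected by the remaining edges (loops are thus excluded).\<close>
definition acyclic_edges :: "('e \<Rightarrow> 'v \<times> 'v) \<Rightarrow> 'e set \<Rightarrow> bool" where
  "acyclic_edges ends F \<longleftrightarrow>
     (\<forall>e\<in>F. (fst (ends e), snd (ends e)) \<notin> (adj ends (F - {e}))\<^sup>*)"

definition spanning_tree :: "'v set \<Rightarrow> 'e set \<Rightarrow> ('e \<Rightarrow> 'v \<times> 'v) \<Rightarrow> 'e set \<Rightarrow> bool" where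
  "spanning_tree V E ends T \<longleftrightarrow> T \<subseteq> E \<and> connected_graph V T ends \<and> acyclic_edges ends T"

definition kappa :: "'v set \<Rightarrow> 'e set \<Rightarrow> ('e \<Rightarrow> 'v \<times> 'v) \<Rightarrow> nat" where
  "kappa V E ends = card {T. spanning_tree V E ends T}"

definition components :: "'v set \<Rightarrow> ('e \<Rightarrow> 'v \<times> 'v) \<Rightarrow> 'e set \<Rightarrow> 'v set set" where
  "components V ends F = (\<lambda>v. {w \<in> V. (v, w) \<in> (adj ends F)\<^sup>*}) ` V"

definition F_forests :: "'v set \<Rightarrow> 'e set \<Rightarrow> ('e \<Rightarrow> 'v \<times> 'v) \<Rightarrow> 'v set \<Rightarrow> nat \<Rightarrow> nat" where
  "F_forests V E ends Rv t = card {F. F \<subseteq> E \<and> acyclic_edges ends F \<and>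
       card (components V ends F) = t \<and>
       (\<forall>C\<in>components V ends F. card (C \<inter> Rv) = 1)}"

definition verts :: "('e \<Rightarrow> 'v \<times> 'v) \<Rightarrow> 'e set \<Rightarrow> 'v set" where
  "verts ends S = fst ` ends ` S \<union> snd ` ends ` S"

definition has_tail :: "'v set \<Rightarrow> 'e set \<Rightarrow> ('e \<Rightarrow> 'v \<times> 'v) \<Rightarrow> 'v set \<Rightarrow> bool" where
  "has_tail V E ends R \<longleftrightarrow> (\<exists>v\<in>V - R. \<exists>e\<in>E.
      {e'\<in>E. fst (ends e') = v \<or> snd (ends e') = v} = {e} \<and> fst (ends e) \<noteq> snd (ends e))"

definition is_walk :: "'e set \<Rightarrow> ('e \<Rightarrow> 'v \<times> 'v) \<Rightarrow> 'v list \<Rightarrow> 'e list \<Rightarrow> bool" where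
  "is_walk E ends vs es \<longleftrightarrow> length vs = Suc (length es) \<and>
     (\<forall>i < length es. es ! i \<in> E \<and> joins ends (es ! i) (vs ! i) (vs ! Suc i))"

definition AP2 :: "'e set \<Rightarrow> ('e \<Rightarrow> 'v \<times> 'v) \<Rightarrow> 'v set \<Rightarrow> ('v list \<times> 'e list) set" where
  "AP2 E ends R = {(vs, es). is_walk E ends vs es \<and> es \<noteq> [] \<and>
      hd vs \<in> R \<and> last vs \<in> R \<and> hd vs \<noteq> last vs \<and> distinct vs \<and>
      (\<forall>i. 0 < i \<and> i < length es \<longrightarrow> vs ! i \<notin> R)}"

definition APc :: "'e set \<Rightarrow> ('e \<Rightarrow> 'v \<times> 'v) \<Rightarrow> 'v set \<Rightarrow> ('v list \<times> 'e list) set" where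
  "APc E ends R = {(vs, es). is_walk E ends vs es \<and> es \<noteq> [] \<and>
      hd vs \<in> R \<and> last vs = hd vs \<and> distinct (tl vs) \<and> distinct es \<and>
      (\<forall>i. 0 < i \<and> i < length es \<longrightarrow> vs ! i \<notin> R)}"

definition share_rel :: "('v list \<times> 'e list) set \<Rightarrow> (('v list \<times> 'e list) \<times> ('v list \<times> 'e list)) set" where
  "share_rel P = {(A, B). A \<in> P \<and> B \<in> P \<and> set (snd A) \<inter> set (snd B) \<noteq> {}}"

definition path_group :: "('v list \<times> 'e list) set \<Rightarrow> ('v list \<times> 'e list) \<Rightarrow> ('v list \<times> 'e list) set" where
  "path_group P A = {B. (A, B) \<in> (share_rel P)\<^sup>*}"

definition group_edges :: "('v list \<times> 'e list) set \<Rightarrow> 'e set" where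
  "group_edges G = (\<Union>B\<in>G. set (snd B))"

definition path_ends :: "('v list \<times> 'e list) \<Rightarrow> 'v set" where
  "path_ends A = {hd (fst A), last (fst A)}"

definition seg2 :: "'e set \<Rightarrow> ('e \<Rightarrow> 'v \<times> 'v) \<Rightarrow> 'v set \<Rightarrow> 'e set set" where
  "seg2 E ends R = (\<lambda>A. group_edges (path_group (AP2 E ends R) A)) ` AP2 E ends R"

definition AP1 :: "'e set \<Rightarrow> ('e \<Rightarrow> 'v \<times> 'v) \<Rightarrow> 'v set \<Rightarrow> ('v list \<times> 'e list) set" where
  "AP1 E ends R = {A \<in> APc E ends R. set (snd A) \<inter> \<Union>(seg2 E ends R) = {}}"

definition seg1 :: "'e set \<Rightarrow> ('e \<Rightarrow> 'v \<times> 'v) \<Rightarrow> 'v set \<Rightarrow> 'e set set" where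
  "seg1 E ends R = (\<lambda>A. group_edges (path_group (AP1 E ends R) A)) ` AP1 E ends R"

definition segs :: "'e set \<Rightarrow> ('e \<Rightarrow> 'v \<times> 'v) \<Rightarrow> 'v set \<Rightarrow> 'e set set" where
  "segs E ends R = seg2 E ends R \<union> seg1 E ends R"

definition segment_decomposition :: "'v set \<Rightarrow> 'e set \<Rightarrow> ('e \<Rightarrow> 'v \<times> 'v) \<Rightarrow> 'v set \<Rightarrow> bool" where
  "segment_decomposition V E ends R \<longleftrightarrow>
     (\<forall>A\<in>AP2 E ends R. \<forall>B\<in>path_group (AP2 E ends R) A. path_ends B = path_ends A) \<and>
     (\<forall>A\<in>AP1 E ends R. \<forall>B\<in>path_group (AP1 E ends R) A. hd (fst B) = hd (fst A)) \<and>
     (\<forall>S\<in>segs E ends R. \<forall>S'\<in>segs E ends R. S \<noteq> S' \<longrightarrow>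
         S \<inter> S' = {} \<and> verts ends S \<inter> verts ends S' \<subseteq> R) \<and>
     \<Union>(segs E ends R) = E \<and> \<Union>(verts ends ` segs E ends R) = V"

text \<open>Elements of Z_p as compatible sequences of residues; pi_n(a) = a n \<in> {0..<p^n} = Gamma_n.\<close>
definition zp_elem :: "nat \<Rightarrow> (nat \<Rightarrow> nat) \<Rightarrow> bool" where
  "zp_elem p a \<longleftrightarrow> (\<forall>n. a n < p ^ n \<and> a (Suc n) mod p ^ n = a n)"

text \<open>The n-th layer X_n: a vertex v with I_v = Gamma (v \<in> R) has the single preimage
  (v,0); an unramified v has preimages (v,g), g \<in> Gamma_n. Edge (e,g) joins
  (o(e), g I_o(e)) to (t(e), (g + alpha(e)) I_t(e)).\<close>
definition cls :: "'v set \<Rightarrow> nat \<Rightarrow> nat \<Rightarrow> 'v \<Rightarrow> nat \<Rightarrow> 'v \<times> nat" where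
  "cls R p n v g = (if v \<in> R then (v, 0) else (v, g mod p ^ n))"

definition cover_V :: "'v set \<Rightarrow> 'v set \<Rightarrow> nat \<Rightarrow> nat \<Rightarrow> ('v \<times> nat) set" where
  "cover_V V R p n = {cls R p n v g | v g. v \<in> V \<and> g < p ^ n}"

definition cover_E :: "'e set \<Rightarrow> nat \<Rightarrow> nat \<Rightarrow> ('e \<times> nat) set" where
  "cover_E E p n = E \<times> {..<p ^ n}"

definition cover_ends :: "('e \<Rightarrow> 'v \<times> 'v) \<Rightarrow> 'v set \<Rightarrow> ('e \<Rightarrow> nat \<Rightarrow> nat) \<Rightarrow> nat \<Rightarrow> nat
    \<Rightarrow> ('e \<times> nat) \<Rightarrow> ('v \<times> nat) \<times> ('v \<times> nat)" where
  "cover_ends ends R \<alpha> p n = (\<lambda>(e, g).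
      (cls R p n (fst (ends e)) g, cls R p n (snd (ends e)) (g + \<alpha> e n)))"

definition seg_cover_V :: "'v set \<Rightarrow> ('e \<Rightarrow> 'v \<times> 'v) \<Rightarrow> 'v set \<Rightarrow> nat \<Rightarrow> nat \<Rightarrow> 'e set \<Rightarrow> ('v \<times> nat) set" where
  "seg_cover_V V ends R p n S = {x \<in> cover_V V R p n. fst x \<in> verts ends S}"

definition admissible :: "'v set \<Rightarrow> 'e set \<Rightarrow> ('e \<Rightarrow> 'v \<times> 'v) \<Rightarrow> 'v set \<Rightarrow> 'e set set \<Rightarrow> bool" where
  "admissible V E ends R I \<longleftrightarrow> I \<subseteq> seg2 E ends R \<and> card I = card R - 1 \<and>
     (\<exists>T. spanning_tree V E ends T \<and>
        (\<forall>S\<in>I. spanning_tree (verts ends S) S ends (T \<inter> S)))"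

end

theory Submission
  imports Defs "HOL-Library.FuncSet"
begin

text \<open>The count is purely combinatorial. Both X and X_n are glued from pieces (the segments,
  resp. their preimages) that meet only in ramified vertices, each piece containing one or two
  of them. A spanning tree T restricts on every piece to a forest in which every vertex reaches
  a ramified vertex of the piece, and on a piece with two ramified vertices this forest either
  joins or separates them. Counting edges with card V = #components + #edges for forests, T is a
  spanning tree exactly when the set I of pieces whose two ramified vertices T joins has l - 1
  elements and connects all ramified vertices, i.e. I is admissible; conversely any choice of such
  forests glues to a spanning tree. So kappa is the sum over these I of products of per-piece
  counts: spanning trees of the pieces in I, forests counted by F_t for the others. Since the
  ramified vertices are totally ramified, X_n has the same ramified vertices as X and the preimages
  of the segments decompose it in the same way, with the same admissible sets I.\<close>

section \<open>Reachability and forests\<close>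

lemma sym_adj: "sym (adj ends F)"
  unfolding adj_def joins_def sym_def by auto

lemma adj_rtrancl_sym: "(x, y) \<in> (adj ends F)\<^sup>* \<Longrightarrow> (y, x) \<in> (adj ends F)\<^sup>*"
  using sym_rtrancl[OF sym_adj, of ends F] unfolding sym_def by blast

lemma adj_mono: "F \<subseteq> G \<Longrightarrow> adj ends F \<subseteq> adj ends G"
  unfolding adj_def by auto

lemma adj_rtrancl_mono: "F \<subseteq> G \<Longrightarrow> (x, y) \<in> (adj ends F)\<^sup>* \<Longrightarrow> (x, y) \<in> (adj ends G)\<^sup>*"
  using rtrancl_mono[OF adj_mono] by blast

lemma joins_in_adj: "e \<in> F \<Longrightarrow> joins ends e x y \<Longrightarrow> (x, y) \<in> adj ends F"
  unfolding adj_def by blast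

lemma edge_in_adj_rtrancl: "e \<in> F \<Longrightarrow> (fst (ends e), snd (ends e)) \<in> (adj ends F)\<^sup>*"
  by (rule r_into_rtrancl, rule joins_in_adj) (auto simp: joins_def)

lemma adj_insert:
  "adj ends (insert e F) = adj ends F \<union> {(fst (ends e), snd (ends e)), (snd (ends e), fst (ends e))}"
  unfolding adj_def joins_def by (auto simp: prod_eq_iff)

lemma rtrancl_insert_sym_pair:
  assumes "(x, y) \<in> (r \<union> {(a, b), (b, a)})\<^sup>*"
  shows "(x, y) \<in> r\<^sup>* \<or> ((x, a) \<in> r\<^sup>* \<and> (b, y) \<in> r\<^sup>*) \<or> ((x, b) \<in> r\<^sup>* \<and> (a, y) \<in> r\<^sup>*)"
  using assms
proof (induction rule: rtrancl_induct)
  case (step y z)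
  then consider "(y, z) \<in> r" | "y = a" "z = b" | "y = b" "z = a" by auto
  then show ?case
    using step.IH by cases (auto intro: rtrancl_into_rtrancl)
qed simp

lemma adj_rtrancl_insert_iff:
  assumes "ends e = (a, b)"
  shows "(x, y) \<in> (adj ends (insert e F))\<^sup>* \<longleftrightarrow> (x, y) \<in> (adj ends F)\<^sup>* \<or>
    ((x, a) \<in> (adj ends F)\<^sup>* \<and> (b, y) \<in> (adj ends F)\<^sup>*) \<or>
    ((x, b) \<in> (adj ends F)\<^sup>* \<and> (a, y) \<in> (adj ends F)\<^sup>*)" (is "?lhs \<longleftrightarrow> ?rhs")
proof
  show "?lhs \<Longrightarrow> ?rhs"
    unfolding adj_insert assms by (simp add: rtrancl_insert_sym_pair)
  have "(a, b) \<in> (adj ends (insert e F))\<^sup>*"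
    using edge_in_adj_rtrancl[of e "insert e F" ends] assms by simp
  moreover have "(u, v) \<in> (adj ends F)\<^sup>* \<Longrightarrow> (u, v) \<in> (adj ends (insert e F))\<^sup>*" for u v
    by (rule adj_rtrancl_mono[OF subset_insertI])
  ultimately show "?rhs \<Longrightarrow> ?lhs"
    by (meson adj_rtrancl_sym rtrancl_trans)
qed

lemma adj_rtrancl_insert_connected:
  assumes "ends e = (a, b)" "(a, b) \<in> (adj ends F)\<^sup>*"
  shows "(adj ends (insert e F))\<^sup>* = (adj ends F)\<^sup>*"
  using assms(2) adj_rtrancl_sym[OF assms(2)]
  by (auto simp: adj_rtrancl_insert_iff[of ends e, OF assms(1)] intro: rtrancl_trans)

lemma acyclic_edges_mono: "G \<subseteq> H \<Longrightarrow> acyclic_edges ends H \<Longrightarrow> acyclic_edges ends G"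
  unfolding acyclic_edges_def by (meson Diff_mono adj_rtrancl_mono subset_refl subsetD)

lemma acyclic_edges_empty: "acyclic_edges ends {}"
  unfolding acyclic_edges_def by simp

lemma not_acyclic_edges_insert:
  "ends e = (a, b) \<Longrightarrow> (a, b) \<in> (adj ends F)\<^sup>* \<Longrightarrow> e \<notin> F \<Longrightarrow> \<not> acyclic_edges ends (insert e F)"
  unfolding acyclic_edges_def by auto

lemma acyclic_edges_insert:
  assumes e: "ends e = (a, b)" and bridge: "(a, b) \<notin> (adj ends F)\<^sup>*" and "e \<notin> F"
  shows "acyclic_edges ends (insert e F) \<longleftrightarrow> acyclic_edges ends F"
proof
  assume F: "acyclic_edges ends F"
  show "acyclic_edges ends (insert e F)"
    unfolding acyclic_edges_def
  proof (intro ballI notI)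
    fix f assume f: "f \<in> insert e F"
      and cyc: "(fst (ends f), snd (ends f)) \<in> (adj ends (insert e F - {f}))\<^sup>*"
    obtain c d where cd: "ends f = (c, d)" by fastforce
    show False
    proof (cases "f = e")
      case True
      then show False using cyc bridge e \<open>e \<notin> F\<close> by simp
    next
      case False
      then have "f \<in> F" and "insert e F - {f} = insert e (F - {f})" using f by auto
      moreover have "(c, d) \<notin> (adj ends (F - {f}))\<^sup>*"
        using F \<open>f \<in> F\<close> cd unfolding acyclic_edges_def by force
      ultimately consider "(c, a) \<in> (adj ends (F - {f}))\<^sup>*" "(b, d) \<in> (adj ends (F - {f}))\<^sup>*"
        | "(c, b) \<in> (adj ends (F - {f}))\<^sup>*" "(a, d) \<in> (adj ends (F - {f}))\<^sup>*"
        using cyc cd by (auto simp: adj_rtrancl_insert_iff[of ends e, OF e])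
      moreover have "(c, d) \<in> (adj ends F)\<^sup>*"
        using edge_in_adj_rtrancl[OF \<open>f \<in> F\<close>, of ends] cd by simp
      ultimately have "(a, b) \<in> (adj ends F)\<^sup>*"
        by cases (meson Diff_subset adj_rtrancl_mono adj_rtrancl_sym rtrancl_trans)+
      then show False using bridge by blast
    qed
  qed
qed (rule acyclic_edges_mono[OF subset_insertI])

section \<open>Components and the rank formula\<close>

definition component_of :: "'v set \<Rightarrow> ('e \<Rightarrow> 'v \<times> 'v) \<Rightarrow> 'e set \<Rightarrow> 'v \<Rightarrow> 'v set" where
  "component_of W ends F x = {w \<in> W. (x, w) \<in> (adj ends F)\<^sup>*}"

lemma mem_component_of: "w \<in> component_of W ends F x \<longleftrightarrow> w \<in> W \<and> (x, w) \<in> (adj ends F)\<^sup>*"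
  unfolding component_of_def by simp

lemma components_eq_image: "components W ends F = component_of W ends F ` W"
  unfolding components_def component_of_def by simp

lemma component_of_eq:
  assumes "(x, y) \<in> (adj ends F)\<^sup>*"
  shows "component_of W ends F x = component_of W ends F y"
  using assms adj_rtrancl_sym[OF assms] unfolding component_of_def by (meson rtrancl_trans)

lemma component_of_eqD:
  "component_of W ends F x = component_of W ends F y \<Longrightarrow> y \<in> W \<Longrightarrow> (x, y) \<in> (adj ends F)\<^sup>*"
  unfolding component_of_def by blast

lemma card_components_empty: "finite W \<Longrightarrow> card (components W ends {}) = card W"
proof -
  have "adj ends {} = {}" unfolding adj_def by simp
  then have "components W ends {} = (\<lambda>x. {x}) ` W"
    unfolding components_eq_image component_of_def by auto
  then show "finite W \<Longrightarrow> card (components W ends {}) = card W"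
    by (simp add: card_image)
qed

lemma card_components_connected:
  assumes "connected_graph W F ends"
  shows "card (components W ends F) = 1"
proof -
  obtain w where w: "w \<in> W" using assms unfolding connected_graph_def by auto
  have "component_of W ends F x = component_of W ends F w" if "x \<in> W" for x
  proof (rule component_of_eq)
    show "(x, w) \<in> (adj ends F)\<^sup>*" using assms that w unfolding connected_graph_def by blast
  qed
  then have "components W ends F = {component_of W ends F w}"
    unfolding components_eq_image using w by blast
  then show ?thesis by simp
qed

lemma component_of_insert:
  fixes ends :: "'e \<Rightarrow> 'v \<times> 'v" and F :: "'e set"
  assumes e: "ends e = (a, b)" and "x \<in> W"
  defines "C \<equiv> component_of W ends F"
  shows "component_of W ends (insert e F) x = (if x \<in> C a \<union> C b then C a \<union> C b else C x)"
proof (cases "x \<in> C a \<union> C b")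
  case True
  have ab: "(a, b) \<in> (adj ends (insert e F))\<^sup>*"
    using edge_in_adj_rtrancl[of e "insert e F" ends] e by simp
  have "(a, x) \<in> (adj ends F)\<^sup>* \<or> (b, x) \<in> (adj ends F)\<^sup>*"
    using True unfolding C_def by (auto simp: mem_component_of)
  then have "(a, x) \<in> (adj ends (insert e F))\<^sup>*"
    using ab adj_rtrancl_mono[OF subset_insertI] by (meson rtrancl_trans)
  then have "component_of W ends (insert e F) x = component_of W ends (insert e F) a"
    by (rule component_of_eq[symmetric])
  also have "\<dots> = C a \<union> C b"
    unfolding C_def component_of_def adj_rtrancl_insert_iff[of ends e, OF e] by auto
  finally show ?thesis
    using True by simp
next
  case False
  then have "(x, a) \<notin> (adj ends F)\<^sup>*" "(x, b) \<notin> (adj ends F)\<^sup>*"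
    using \<open>x \<in> W\<close> adj_rtrancl_sym[of x a ends F] adj_rtrancl_sym[of x b ends F]
    unfolding C_def by (auto simp: mem_component_of)
  then have "(x, w) \<in> (adj ends (insert e F))\<^sup>* \<longleftrightarrow> (x, w) \<in> (adj ends F)\<^sup>*" for w
    unfolding adj_rtrancl_insert_iff[of ends e, OF e] by blast
  then show ?thesis
    using False unfolding C_def component_of_def by auto
qed

lemma card_components_insert_bridge:
  fixes ends :: "'e \<Rightarrow> 'v \<times> 'v"
  assumes "finite W" and e: "ends e = (a, b)" and "a \<in> W" "b \<in> W"
    and bridge: "(a, b) \<notin> (adj ends F)\<^sup>*"
  shows "card (components W ends (insert e F)) + 1 = card (components W ends F)"
proof -
  define C where "C = component_of W ends F"
  define C' where "C' = component_of W ends (insert e F)"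
  define Rest where "Rest = C ` (W - (C a \<union> C b))"
  have a: "a \<in> C a" and b: "b \<in> C b"
    using \<open>a \<in> W\<close> \<open>b \<in> W\<close> unfolding C_def mem_component_of by auto
  have CW: "C a \<union> C b \<subseteq> W"
    unfolding C_def component_of_def by blast
  then have W_split: "f ` W = f ` (C a \<union> C b) \<union> f ` (W - (C a \<union> C b))" for f :: "'v \<Rightarrow> 'v set"
    by blast
  have same: "C x = C y" if "x \<in> C y" for x y
    using that component_of_eq[of y x ends F W] unfolding C_def mem_component_of by simp
  have "C ` (C a \<union> C b) = {C a, C b}"
    using a b by (auto dest: same)
  then have old: "components W ends F = insert (C a) (insert (C b) Rest)"
    unfolding components_eq_image C_def[symmetric] Rest_def W_split[of C] by simp
  have "C' x = C a \<union> C b" if "x \<in> C a \<union> C b" for x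
    using component_of_insert[where ends=ends and e=e and x=x and W=W and F=F, OF e] that CW
    unfolding C_def C'_def by auto
  then have "C' ` (C a \<union> C b) = {C a \<union> C b}"
    using a by blast
  moreover have "C' ` (W - (C a \<union> C b)) = Rest"
    unfolding Rest_def C_def C'_def
    using component_of_insert[where ends=ends and e=e and W=W and F=F, OF e] by (auto simp: image_def)
  ultimately have new: "components W ends (insert e F) = insert (C a \<union> C b) Rest"
    unfolding components_eq_image C'_def[symmetric] W_split[of C'] by simp
  have not_rest: "X \<notin> Rest" if "X \<subseteq> C a \<union> C b" for X
  proof
    assume "X \<in> Rest"
    then obtain x where "x \<in> W" "x \<notin> C a \<union> C b" "X = C x"
      unfolding Rest_def by blast
    moreover have "x \<in> C x"
      using \<open>x \<in> W\<close> unfolding C_def mem_component_of by simp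
    ultimately show False
      using that by blast
  qed
  have "C a \<noteq> C b"
    using component_of_eqD[of W ends F a b] \<open>b \<in> W\<close> bridge unfolding C_def by blast
  moreover have "finite Rest"
    unfolding Rest_def using \<open>finite W\<close> by simp
  ultimately show ?thesis
    unfolding old new using not_rest[of "C a"] not_rest[of "C b"] not_rest[of "C a \<union> C b"]
    by (simp add: card_insert_if)
qed

lemma card_components_plus_edges:
  assumes "finite F" "finite W" "\<forall>e\<in>F. fst (ends e) \<in> W \<and> snd (ends e) \<in> W"
  shows "card W \<le> card (components W ends F) + card F \<and>
    (acyclic_edges ends F \<longleftrightarrow> card W = card (components W ends F) + card F)"
  using assms
proof (induction F rule: finite_induct)
  case empty
  then show ?case by (simp add: card_components_empty acyclic_edges_empty)
next
  case (insert e F)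
  obtain a b where e: "ends e = (a, b)" by fastforce
  show ?case
  proof (cases "(a, b) \<in> (adj ends F)\<^sup>*")
    case True
    have "components W ends (insert e F) = components W ends F"
      unfolding components_def adj_rtrancl_insert_connected[OF e True] ..
    moreover have "card W \<le> card (components W ends F) + card F"
      using insert by simp
    ultimately show ?thesis
      using not_acyclic_edges_insert[OF e True \<open>e \<notin> F\<close>] insert.hyps by simp
  next
    case False
    have "a \<in> W" "b \<in> W"
      using insert.prems e by auto
    then have count: "card (components W ends (insert e F)) + card (insert e F) =
        card (components W ends F) + card F"
      using card_components_insert_bridge[OF \<open>finite W\<close> e _ _ False] insert.hyps by simp
    show ?thesis
      unfolding count acyclic_edges_insert[OF e False \<open>e \<notin> F\<close>] using insert by simp
  qed
qed

section \<open>Rooted spanning forests\<close>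

lemma separating_forest_insert:
  assumes acyc: "acyclic_edges ends F"
    and sep: "\<forall>r\<in>M. \<forall>r'\<in>M. r \<noteq> r' \<longrightarrow> (r, r') \<notin> (adj ends F)\<^sup>*"
    and e: "joins ends e y z" and y: "\<forall>r\<in>M. (y, r) \<notin> (adj ends F)\<^sup>*"
    and z: "\<exists>r\<in>M. (z, r) \<in> (adj ends F)\<^sup>*"
  shows "e \<notin> F" "acyclic_edges ends (insert e F)"
    "\<forall>r\<in>M. \<forall>r'\<in>M. r \<noteq> r' \<longrightarrow> (r, r') \<notin> (adj ends (insert e F))\<^sup>*"
proof -
  obtain a b where ab: "ends e = (a, b)" by fastforce
  have yz: "(y, z) \<notin> (adj ends F)\<^sup>*"
    using y z by (meson rtrancl_trans)
  then show "e \<notin> F"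
    using e joins_in_adj[of e F ends y z] by auto
  moreover have "(a, b) \<notin> (adj ends F)\<^sup>*"
    using e ab yz adj_rtrancl_sym[of z y ends F] unfolding joins_def by auto
  ultimately show "acyclic_edges ends (insert e F)"
    using acyclic_edges_insert[of ends e, OF ab] acyc by blast
  have "y = a \<or> y = b"
    using e ab unfolding joins_def by auto
  then show "\<forall>r\<in>M. \<forall>r'\<in>M. r \<noteq> r' \<longrightarrow> (r, r') \<notin> (adj ends (insert e F))\<^sup>*"
    using y sep adj_rtrancl_sym[of _ y ends F]
    by (auto simp: adj_rtrancl_insert_iff[of ends e, OF ab])
qed

text \<open>A subset-maximal forest in which the roots M stay pairwise separated already lets every
  vertex reach M: an edge from a vertex that cannot reach M to one that can could be added.\<close>

lemma rooted_spanning_forest: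
  assumes "finite S" and reach: "\<forall>x\<in>W. \<exists>r\<in>M. (x, r) \<in> (adj ends S)\<^sup>*"
  obtains F where "F \<subseteq> S" "acyclic_edges ends F" "\<forall>x\<in>W. \<exists>r\<in>M. (x, r) \<in> (adj ends F)\<^sup>*"
    "\<forall>r\<in>M. \<forall>r'\<in>M. r \<noteq> r' \<longrightarrow> (r, r') \<notin> (adj ends F)\<^sup>*"
proof -
  define Fam where "Fam = {F. F \<subseteq> S \<and> acyclic_edges ends F \<and>
    (\<forall>r\<in>M. \<forall>r'\<in>M. r \<noteq> r' \<longrightarrow> (r, r') \<notin> (adj ends F)\<^sup>*)}"
  have "adj ends {} = {}" unfolding adj_def by simp
  then have "{} \<in> Fam" unfolding Fam_def by (simp add: acyclic_edges_empty)
  moreover have "finite Fam"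
    using \<open>finite S\<close> unfolding Fam_def by (simp add: finite_subset[of _ "Pow S"] subset_eq)
  ultimately obtain F where "F \<in> Fam" and max: "\<And>G. G \<in> Fam \<Longrightarrow> F \<subseteq> G \<Longrightarrow> F = G"
    using finite_has_maximal[of Fam] by blast
  then have FS: "F \<subseteq> S" and acyc: "acyclic_edges ends F"
    and sep: "\<forall>r\<in>M. \<forall>r'\<in>M. r \<noteq> r' \<longrightarrow> (r, r') \<notin> (adj ends F)\<^sup>*"
    unfolding Fam_def by auto
  have extend: "\<exists>r\<in>M. (y, r) \<in> (adj ends F)\<^sup>*"
    if "(y, z) \<in> adj ends S" and z: "\<exists>r\<in>M. (z, r) \<in> (adj ends F)\<^sup>*" for y z
  proof (rule ccontr)
    assume "\<not> (\<exists>r\<in>M. (y, r) \<in> (adj ends F)\<^sup>*)"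
    moreover obtain e where "e \<in> S" and e: "joins ends e y z"
      using \<open>(y, z) \<in> adj ends S\<close> unfolding adj_def by auto
    ultimately have "e \<notin> F" "insert e F \<in> Fam"
      using separating_forest_insert[OF acyc sep e _ z] FS unfolding Fam_def by auto
    then show False
      using max[of "insert e F"] by blast
  qed
  have "\<exists>r\<in>M. (y, r) \<in> (adj ends F)\<^sup>*" if "(y, r) \<in> (adj ends S)\<^sup>*" "r \<in> M" for y r
    using that(1)
  proof (induction rule: converse_rtrancl_induct)
    case base
    then show ?case using that(2) by blast
  next
    case (step y z)
    show ?case using step.hyps(1) step.IH by (rule extend)
  qed
  then have reach_F: "\<forall>x\<in>W. \<exists>r\<in>M. (x, r) \<in> (adj ends F)\<^sup>*"
    using reach by blast
  from FS acyc reach_F sep show ?thesis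
    by (rule that)
qed

lemma connected_graph_spanning_tree:
  assumes "finite F" and "connected_graph W F ends"
  obtains T where "spanning_tree W F ends T"
proof -
  obtain h where "h \<in> W"
    using assms(2) unfolding connected_graph_def by blast
  then have "\<forall>x\<in>W. (x, h) \<in> (adj ends F)\<^sup>*"
    using assms(2) unfolding connected_graph_def by metis
  then have "\<forall>x\<in>W. \<exists>r\<in>{h}. (x, r) \<in> (adj ends F)\<^sup>*"
    by simp
  then obtain T where T: "T \<subseteq> F" "acyclic_edges ends T" "\<forall>x\<in>W. \<exists>r\<in>{h}. (x, r) \<in> (adj ends T)\<^sup>*"
    and "\<forall>r\<in>{h}. \<forall>r'\<in>{h}. r \<noteq> r' \<longrightarrow> (r, r') \<notin> (adj ends T)\<^sup>*"
    by (rule rooted_spanning_forest[OF assms(1)])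
  have "(x, y) \<in> (adj ends T)\<^sup>*" if "x \<in> W" "y \<in> W" for x y
  proof -
    have "(x, h) \<in> (adj ends T)\<^sup>*" "(y, h) \<in> (adj ends T)\<^sup>*"
      using T(3) that by auto
    then show ?thesis
      by (rule rtrancl_trans[OF _ adj_rtrancl_sym])
  qed
  then have "connected_graph W T ends"
    using \<open>h \<in> W\<close> unfolding connected_graph_def by blast
  then show ?thesis
    using that T(1,2) unfolding spanning_tree_def by blast
qed

section \<open>Trees on the roots\<close>

definition root_link :: "('i \<Rightarrow> 'a set) \<Rightarrow> 'i set \<Rightarrow> ('a \<times> 'a) set" where
  "root_link RS I = {(u, v). \<exists>S\<in>I. u \<in> RS S \<and> v \<in> RS S}"

text \<open>Viewing every index S in I as an edge between the two points of RS S, I is a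
  spanning tree of R: it has card R - 1 edges and connects R.\<close>

definition root_tree :: "'a set \<Rightarrow> 'i set \<Rightarrow> ('i \<Rightarrow> 'a set) \<Rightarrow> 'i set \<Rightarrow> bool" where
  "root_tree R P RS I \<longleftrightarrow> I \<subseteq> {S \<in> P. card (RS S) = 2} \<and> card I = card R - 1 \<and>
     (\<forall>u\<in>R. \<forall>v\<in>R. (u, v) \<in> (root_link RS I)\<^sup>*)"

lemma rtrancl_map_prod_inj:
  assumes "inj f"
  shows "(f a, f b) \<in> (map_prod f f ` Q)\<^sup>* \<longleftrightarrow> (a, b) \<in> Q\<^sup>*"
proof
  have "\<exists>b'. y = f b' \<and> (a, b') \<in> Q\<^sup>*" if "(f a, y) \<in> (map_prod f f ` Q)\<^sup>*" for y
    using that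
  proof (induction rule: rtrancl_induct)
    case (step y z)
    then obtain b' where b': "y = f b'" "(a, b') \<in> Q\<^sup>*" by blast
    obtain c d where "(c, d) \<in> Q" "y = f c" "z = f d"
      using step.hyps(2) by auto
    then show ?case
      using b' injD[OF assms] by (metis rtrancl.rtrancl_into_rtrancl)
  qed blast
  then show "(f a, f b) \<in> (map_prod f f ` Q)\<^sup>* \<Longrightarrow> (a, b) \<in> Q\<^sup>*"
    using injD[OF assms] by blast
next
  show "(a, b) \<in> Q\<^sup>* \<Longrightarrow> (f a, f b) \<in> (map_prod f f ` Q)\<^sup>*"
  proof (induction rule: rtrancl_induct)
    case (step y z)
    then have "(f y, f z) \<in> map_prod f f ` Q" by force
    with step.IH show ?case by simp
  qed simp
qed

lemma root_tree_image:
  assumes "inj f"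
  shows "root_tree (f ` R) P (\<lambda>S. f ` RS S) I \<longleftrightarrow> root_tree R P RS I"
proof -
  have link: "root_link (\<lambda>S. f ` RS S) I = map_prod f f ` root_link RS I"
    unfolding root_link_def by force
  have "card (f ` A) = card A" for A
    using assms by (simp add: card_image inj_on_subset)
  moreover have "(\<forall>u\<in>f ` R. \<forall>v\<in>f ` R. (u, v) \<in> (map_prod f f ` root_link RS I)\<^sup>*) \<longleftrightarrow>
      (\<forall>u\<in>R. \<forall>v\<in>R. (u, v) \<in> (root_link RS I)\<^sup>*)"
    using rtrancl_map_prod_inj[OF assms] by simp
  ultimately show ?thesis
    unfolding root_tree_def link by simp
qed

section \<open>Graphs glued from pieces along the roots\<close>

text \<open>The setting of the count; it is instantiated with the segments of X and with their
  preimages in X_n. The roots of a piece are its ramified vertices.\<close>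

locale piece_decomposition =
  fixes V :: "'v set" and E :: "'e set" and ends :: "'e \<Rightarrow> 'v \<times> 'v" and R :: "'v set"
    and P :: "'i set" and PE :: "'i \<Rightarrow> 'e set" and PV :: "'i \<Rightarrow> 'v set"
  assumes graph: "graph V E ends" and R_subset: "R \<subseteq> V" and V_nonempty: "V \<noteq> {}"
    and finite_P: "finite P"
    and PE_disjoint: "\<And>S S'. S \<in> P \<Longrightarrow> S' \<in> P \<Longrightarrow> S \<noteq> S' \<Longrightarrow> PE S \<inter> PE S' = {}"
    and PE_cover: "(\<Union>S\<in>P. PE S) = E"
    and PV_overlap: "\<And>S S'. S \<in> P \<Longrightarrow> S' \<in> P \<Longrightarrow> S \<noteq> S' \<Longrightarrow> PV S \<inter> PV S' \<subseteq> R"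
    and PV_cover: "(\<Union>S\<in>P. PV S) = V"
    and PE_ends: "\<And>S e. S \<in> P \<Longrightarrow> e \<in> PE S \<Longrightarrow> fst (ends e) \<in> PV S \<and> snd (ends e) \<in> PV S"
    and card_roots: "\<And>S. S \<in> P \<Longrightarrow> card (R \<inter> PV S) \<in> {1, 2}"
begin

definition roots :: "'i \<Rightarrow> 'v set" where
  "roots S = R \<inter> PV S"

definition rooted :: "'i \<Rightarrow> 'e set \<Rightarrow> bool" where
  "rooted S F \<longleftrightarrow> (\<forall>x\<in>PV S. \<exists>r\<in>roots S. (x, r) \<in> (adj ends F)\<^sup>*)"

definition roots_joined :: "'i \<Rightarrow> 'e set \<Rightarrow> bool" where
  "roots_joined S F \<longleftrightarrow> (\<forall>u\<in>roots S. \<forall>v\<in>roots S. (u, v) \<in> (adj ends F)\<^sup>*)"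

definition roots_separated :: "'i \<Rightarrow> 'e set \<Rightarrow> bool" where
  "roots_separated S F \<longleftrightarrow> (\<forall>u\<in>roots S. \<forall>v\<in>roots S. u \<noteq> v \<longrightarrow> (u, v) \<notin> (adj ends F)\<^sup>*)"

definition piecewise_rooted_forest :: "'e set \<Rightarrow> bool" where
  "piecewise_rooted_forest T \<longleftrightarrow> T \<subseteq> E \<and>
     (\<forall>S\<in>P. acyclic_edges ends (T \<inter> PE S) \<and> rooted S (T \<inter> PE S))"

definition piece_choices :: "'i set \<Rightarrow> 'i \<Rightarrow> 'e set set" where
  "piece_choices I S = {F. F \<subseteq> PE S \<and> acyclic_edges ends F \<and> rooted S F \<and>
     (if S \<in> I then roots_joined S F else roots_separated S F)}"

definition joined_pieces :: "'e set \<Rightarrow> 'i set" where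
  "joined_pieces T = {S \<in> P. card (roots S) = 2 \<and> roots_joined S (T \<inter> PE S)}"

abbreviation is_root_tree :: "'i set \<Rightarrow> bool" where
  "is_root_tree \<equiv> root_tree R P roots"

lemma finite_V: "finite V" and finite_E: "finite E"
  using graph unfolding graph_def by auto

lemma PE_subset: "S \<in> P \<Longrightarrow> PE S \<subseteq> E"
  using PE_cover by auto

lemma PV_subset: "S \<in> P \<Longrightarrow> PV S \<subseteq> V"
  using PV_cover by auto

lemma finite_PV: "S \<in> P \<Longrightarrow> finite (PV S)"
  using PV_subset finite_V finite_subset by blast

lemma roots_subset: "roots S \<subseteq> PV S"
  unfolding roots_def by auto

lemma card_roots_cases: "S \<in> P \<Longrightarrow> card (roots S) = 1 \<or> card (roots S) = 2"
  using card_roots unfolding roots_def by auto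

lemma roots_nonempty: "S \<in> P \<Longrightarrow> roots S \<noteq> {}"
  using card_roots_cases by fastforce

lemma R_nonempty: "R \<noteq> {}"
proof -
  obtain S where "S \<in> P" "PV S \<noteq> {}"
    using V_nonempty PV_cover by auto
  then show ?thesis
    using roots_nonempty[of S] unfolding roots_def by blast
qed

lemma two_roots:
  assumes "S \<in> P" "u \<in> roots S" "v \<in> roots S" "u \<noteq> v"
  shows "card (roots S) = 2" "roots S = {u, v}"
proof -
  have "finite (roots S)"
    using finite_PV[OF assms(1)] roots_subset finite_subset by blast
  moreover have "{u, v} \<subseteq> roots S"
    using assms by auto
  ultimately have "2 \<le> card (roots S)"
    using card_mono[of "roots S" "{u, v}"] assms(4) by simp
  then show "card (roots S) = 2"
    using card_roots_cases[OF assms(1)] by auto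
  then show "roots S = {u, v}"
    using card_subset_eq[OF \<open>finite (roots S)\<close> \<open>{u, v} \<subseteq> roots S\<close>] assms(4) by simp
qed

lemma roots_separated_unless_joined:
  assumes "S \<in> P" "\<not> (card (roots S) = 2 \<and> roots_joined S F)"
  shows "roots_separated S F"
  unfolding roots_separated_def
proof (intro ballI impI notI)
  fix u v assume uv: "u \<in> roots S" "v \<in> roots S" "u \<noteq> v" "(u, v) \<in> (adj ends F)\<^sup>*"
  then have "card (roots S) = 2" "roots S = {u, v}"
    using two_roots[OF assms(1)] by blast+
  moreover have "roots_joined S F"
    unfolding roots_joined_def \<open>roots S = {u, v}\<close> using uv(4) adj_rtrancl_sym[OF uv(4)] by auto
  ultimately show False
    using assms(2) by blast
qed

lemma components_rooted:
  assumes "rooted S F"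
  shows "components (PV S) ends F = component_of (PV S) ends F ` roots S"
proof (rule equalityI)
  show "components (PV S) ends F \<subseteq> component_of (PV S) ends F ` roots S"
    unfolding components_eq_image
  proof (rule image_subsetI)
    fix x assume "x \<in> PV S"
    then obtain r where r: "r \<in> roots S" and path: "(x, r) \<in> (adj ends F)\<^sup>*"
      using assms unfolding rooted_def by blast
    show "component_of (PV S) ends F x \<in> component_of (PV S) ends F ` roots S"
      by (rule image_eqI[where f = "component_of (PV S) ends F", OF component_of_eq[OF path] r])
  qed
  show "component_of (PV S) ends F ` roots S \<subseteq> components (PV S) ends F"
    unfolding components_eq_image by (rule image_mono[OF roots_subset])
qed

lemma card_components_rooted:
  assumes "S \<in> P" "rooted S F"
  shows "card (components (PV S) ends F) = (if roots_joined S F then 1 else card (roots S))"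
proof (cases "roots_joined S F")
  case True
  obtain r where r: "r \<in> roots S"
    using roots_nonempty[OF assms(1)] by blast
  have same: "component_of (PV S) ends F u = component_of (PV S) ends F r" if "u \<in> roots S" for u
  proof (rule component_of_eq)
    show "(u, r) \<in> (adj ends F)\<^sup>*"
      using True that r unfolding roots_joined_def by blast
  qed
  have "component_of (PV S) ends F ` roots S = (\<lambda>_. component_of (PV S) ends F r) ` roots S"
    using same by (rule image_cong[OF refl])
  also have "\<dots> = {component_of (PV S) ends F r}"
    by (rule image_constant[OF r])
  finally have "component_of (PV S) ends F ` roots S = {component_of (PV S) ends F r}" .
  then show ?thesis
    using True components_rooted[OF assms(2)] by simp
next
  case False
  have "inj_on (component_of (PV S) ends F) (roots S)"
  proof (rule inj_onI)
    fix u v assume uv: "u \<in> roots S" "v \<in> roots S"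
      and "component_of (PV S) ends F u = component_of (PV S) ends F v"
    then have "(u, v) \<in> (adj ends F)\<^sup>*"
      using component_of_eqD[of "PV S" ends F u v] roots_subset by blast
    then show "u = v"
      using roots_separated_unless_joined[of S F] assms(1) False uv
      unfolding roots_separated_def by blast
  qed
  then show ?thesis
    using False components_rooted[OF assms(2)] by (simp add: card_image)
qed

lemma card_edges_piece:
  assumes "S \<in> P" "F \<subseteq> PE S" "acyclic_edges ends F" "rooted S F"
  shows "card F + card (roots S) =
    card (PV S) + (if card (roots S) = 2 \<and> roots_joined S F then 1 else 0)"
proof -
  have "finite F"
    using finite_subset[OF subset_trans[OF assms(2) PE_subset[OF assms(1)]] finite_E] .
  moreover have "\<forall>e\<in>F. fst (ends e) \<in> PV S \<and> snd (ends e) \<in> PV S"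
    using PE_ends[OF assms(1)] assms(2) by blast
  ultimately have "card (PV S) = card (components (PV S) ends F) + card F"
    using card_components_plus_edges[OF _ finite_PV[OF assms(1)]] assms(3) by blast
  then show ?thesis
    using card_components_rooted[OF assms(1,4)] card_roots_cases[OF assms(1)]
    by (cases "roots_joined S F") auto
qed

lemma card_eq_sum_pieces:
  assumes "T \<subseteq> E"
  shows "card T = (\<Sum>S\<in>P. card (T \<inter> PE S))"
proof -
  have "card T = card (\<Union>S\<in>P. T \<inter> PE S)"
    using assms PE_cover by (metis Int_UN_distrib inf.absorb1)
  also have "\<dots> = (\<Sum>S\<in>P. card (T \<inter> PE S))"
  proof (rule card_UN_disjoint[OF finite_P])
    show "\<forall>S\<in>P. finite (T \<inter> PE S)"
      using finite_subset[OF assms finite_E] by blast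
    show "\<forall>S\<in>P. \<forall>S'\<in>P. S \<noteq> S' \<longrightarrow> T \<inter> PE S \<inter> (T \<inter> PE S') = {}"
      using PE_disjoint by blast
  qed
  finally show ?thesis .
qed

lemma card_unramified_eq_sum_pieces: "card (V - R) = (\<Sum>S\<in>P. card (PV S - R))"
proof -
  have "V - R = (\<Union>S\<in>P. PV S - R)"
    using PV_cover by blast
  then have "card (V - R) = card (\<Union>S\<in>P. PV S - R)"
    by simp
  also have "\<dots> = (\<Sum>S\<in>P. card (PV S - R))"
    using finite_P finite_PV PV_overlap by (intro card_UN_disjoint) auto
  finally show ?thesis .
qed

lemma card_piecewise_rooted_forest:
  assumes "piecewise_rooted_forest T"
  shows "card T + card R = card V + card (joined_pieces T)"
proof -
  have T: "T \<subseteq> E"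
    and pieces: "\<And>S. S \<in> P \<Longrightarrow> acyclic_edges ends (T \<inter> PE S) \<and> rooted S (T \<inter> PE S)"
    using assms unfolding piecewise_rooted_forest_def by auto
  have card_PV: "card (PV S) = card (roots S) + card (PV S - R)" if "S \<in> P" for S
    using card_Int_Diff[OF finite_PV[OF that], of R] unfolding roots_def by (simp add: Int_commute)
  have "(\<Sum>S\<in>P. card (T \<inter> PE S) + card (roots S)) =
      (\<Sum>S\<in>P. card (roots S) + card (PV S - R) + (if S \<in> joined_pieces T then 1 else 0))"
    using card_edges_piece[OF _ _ conjunct1[OF pieces] conjunct2[OF pieces]] card_PV
    unfolding joined_pieces_def by (intro sum.cong) auto
  moreover have "(\<Sum>S\<in>P. if S \<in> joined_pieces T then 1 else 0) = card (joined_pieces T)"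
    using finite_P unfolding joined_pieces_def by (simp add: sum.If_cases Int_def)
  ultimately have "card T = card (V - R) + card (joined_pieces T)"
    using card_eq_sum_pieces[OF T] card_unramified_eq_sum_pieces by (simp add: sum.distrib)
  moreover have "card V = card (V - R) + card R"
    using card_Diff_subset[OF finite_subset[OF R_subset finite_V] R_subset]
      card_mono[OF finite_V R_subset] by simp
  ultimately show ?thesis by simp
qed

lemma adj_step_in_piece:
  assumes "T \<subseteq> E" "S \<in> P" "x \<in> PV S" "x \<notin> R" "(x, y) \<in> adj ends T"
  shows "y \<in> PV S" "(x, y) \<in> adj ends (T \<inter> PE S)"
proof -
  obtain e where e: "e \<in> T" "joins ends e x y"
    using assms(5) unfolding adj_def by blast
  then obtain S' where S': "S' \<in> P" "e \<in> PE S'"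
    using assms(1) PE_cover by blast
  then have "x \<in> PV S'" "y \<in> PV S'"
    using PE_ends[OF S'] e(2) unfolding joins_def by auto
  then have "S' = S"
    using PV_overlap[OF S'(1) assms(2)] assms(3,4) by blast
  then show "y \<in> PV S" "(x, y) \<in> adj ends (T \<inter> PE S)"
    using \<open>y \<in> PV S'\<close> e S'(2) joins_in_adj[of e "T \<inter> PE S"] by auto
qed

text \<open>A path that leaves a piece has to pass through one of its roots.\<close>

lemma reaches_root_in_piece:
  assumes "T \<subseteq> E" "S \<in> P" "x \<in> PV S" "r \<in> roots S" "(x, r) \<in> (adj ends T)\<^sup>*"
  shows "\<exists>r'\<in>roots S. (x, r') \<in> (adj ends (T \<inter> PE S))\<^sup>*"
proof -
  have "(y \<in> PV S \<and> (x, y) \<in> (adj ends (T \<inter> PE S))\<^sup>*) \<or>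
      (\<exists>r'\<in>roots S. (x, r') \<in> (adj ends (T \<inter> PE S))\<^sup>*)" if "(x, y) \<in> (adj ends T)\<^sup>*" for y
    using that
  proof (induction rule: rtrancl_induct)
    case base
    then show ?case using assms(3) by simp
  next
    case (step y z)
    show ?case
    proof (cases "y \<in> PV S \<and> y \<notin> R \<and> (x, y) \<in> (adj ends (T \<inter> PE S))\<^sup>*")
      case True
      then show ?thesis
        using adj_step_in_piece[OF assms(1,2) _ _ step.hyps(2)]
        by (meson rtrancl.rtrancl_into_rtrancl)
    next
      case False
      then show ?thesis
        using step.IH unfolding roots_def by blast
    qed
  qed
  then show ?thesis
    using assms(4,5) roots_subset by blast
qed

lemma roots_linked:
  assumes "S \<in> P" "u \<in> roots S" "v \<in> roots S" "(u, v) \<in> (adj ends (T \<inter> PE S))\<^sup>*"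
  shows "(u, v) \<in> (root_link roots (joined_pieces T))\<^sup>*"
proof (cases "u = v")
  case False
  then have "card (roots S) = 2" "roots S = {u, v}"
    using two_roots[OF assms(1-3)] by auto
  moreover have "roots_joined S (T \<inter> PE S)"
    unfolding roots_joined_def \<open>roots S = {u, v}\<close>
    using assms(4) adj_rtrancl_sym[OF assms(4)] by auto
  ultimately have "S \<in> joined_pieces T"
    unfolding joined_pieces_def using assms(1) by blast
  then have "(u, v) \<in> root_link roots (joined_pieces T)"
    unfolding root_link_def using assms(2,3) by blast
  then show ?thesis by (rule r_into_rtrancl)
qed simp

lemma root_path_linked:
  assumes "T \<subseteq> E" "u \<in> R" "(u, x) \<in> (adj ends T)\<^sup>*"
  shows "\<exists>S\<in>P. \<exists>r\<in>roots S. x \<in> PV S \<and> (u, r) \<in> (root_link roots (joined_pieces T))\<^sup>* \<and>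
    (r, x) \<in> (adj ends (T \<inter> PE S))\<^sup>*"
  using assms(3)
proof (induction rule: rtrancl_induct)
  case base
  obtain S where "S \<in> P" "u \<in> PV S"
    using assms(2) R_subset PV_cover by blast
  then show ?case
    using assms(2) unfolding roots_def by blast
next
  case (step x y)
  then obtain S r where S: "S \<in> P" "r \<in> roots S" "x \<in> PV S"
    and link: "(u, r) \<in> (root_link roots (joined_pieces T))\<^sup>*"
    and path: "(r, x) \<in> (adj ends (T \<inter> PE S))\<^sup>*"
    by blast
  show ?case
  proof (cases "x \<in> R")
    case True
    then have "(u, x) \<in> (root_link roots (joined_pieces T))\<^sup>*"
      using link roots_linked[OF S(1,2) _ path] S(3) unfolding roots_def
      by (meson IntI rtrancl_trans)
    moreover obtain e where e: "e \<in> T" "joins ends e x y"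
      using step.hyps(2) unfolding adj_def by blast
    moreover obtain S' where "S' \<in> P" "e \<in> PE S'"
      using e(1) assms(1) PE_cover by blast
    moreover have "x \<in> PV S'" "y \<in> PV S'"
      using PE_ends[OF \<open>S' \<in> P\<close> \<open>e \<in> PE S'\<close>] e(2) unfolding joins_def by auto
    ultimately show ?thesis
      using True joins_in_adj[of e "T \<inter> PE S'" ends x y] unfolding roots_def
      by (intro bexI[of _ S'] bexI[of _ x]) auto
  next
    case False
    then show ?thesis
      using adj_step_in_piece[OF assms(1) S(1,3) False step.hyps(2)] S link path
      by (meson rtrancl.rtrancl_into_rtrancl)
  qed
qed

lemma roots_linked_if_connected:
  assumes "T \<subseteq> E" "connected_graph V T ends" "u \<in> R" "v \<in> R"
  shows "(u, v) \<in> (root_link roots (joined_pieces T))\<^sup>*"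
proof -
  have "(u, v) \<in> (adj ends T)\<^sup>*"
    using assms(2-4) R_subset unfolding connected_graph_def by blast
  then obtain S r where S: "S \<in> P" "r \<in> roots S" "v \<in> PV S"
    and link: "(u, r) \<in> (root_link roots (joined_pieces T))\<^sup>*"
    and path: "(r, v) \<in> (adj ends (T \<inter> PE S))\<^sup>*"
    using root_path_linked[OF assms(1,3)] by blast
  have "v \<in> roots S"
    using S(3) \<open>v \<in> R\<close> unfolding roots_def by blast
  then show ?thesis
    using link roots_linked[OF S(1,2) _ path] by (meson rtrancl_trans)
qed

lemma root_link_joined_pieces: "(root_link roots (joined_pieces T))\<^sup>* \<subseteq> (adj ends T)\<^sup>*"
proof (rule rtrancl_subset_rtrancl, rule subsetI)
  fix p assume "p \<in> root_link roots (joined_pieces T)"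
  then obtain S u v where "p = (u, v)" "S \<in> joined_pieces T" "u \<in> roots S" "v \<in> roots S"
    unfolding root_link_def by blast
  then have "(u, v) \<in> (adj ends (T \<inter> PE S))\<^sup>*"
    unfolding joined_pieces_def roots_joined_def by blast
  then show "p \<in> (adj ends T)\<^sup>*"
    using adj_rtrancl_mono[OF Int_lower1] \<open>p = (u, v)\<close> by simp
qed

lemma connected_if_roots_linked:
  assumes rooted: "\<forall>S\<in>P. rooted S (T \<inter> PE S)"
    and linked: "\<forall>u\<in>R. \<forall>v\<in>R. (u, v) \<in> (root_link roots (joined_pieces T))\<^sup>*"
  shows "connected_graph V T ends"
proof -
  have roots_connected: "(u, v) \<in> (adj ends T)\<^sup>*" if "u \<in> R" "v \<in> R" for u v
    using linked that root_link_joined_pieces by blast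
  have to_root: "\<exists>r\<in>R. (x, r) \<in> (adj ends T)\<^sup>*" if x: "x \<in> V" for x
  proof -
    obtain S where "S \<in> P" "x \<in> PV S"
      using x PV_cover by blast
    then obtain r where "r \<in> roots S" and path: "(x, r) \<in> (adj ends (T \<inter> PE S))\<^sup>*"
      using rooted unfolding rooted_def by blast
    have "(x, r) \<in> (adj ends T)\<^sup>*"
      using adj_rtrancl_mono[OF Int_lower1 path] .
    then show ?thesis
      using \<open>r \<in> roots S\<close> unfolding roots_def by blast
  qed
  show "connected_graph V T ends"
    unfolding connected_graph_def
  proof (intro conjI ballI)
    fix x y assume "x \<in> V" "y \<in> V"
    then obtain r s where "r \<in> R" "s \<in> R"
      and xr: "(x, r) \<in> (adj ends T)\<^sup>*" and ys: "(y, s) \<in> (adj ends T)\<^sup>*"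
      using to_root by blast
    then show "(x, y) \<in> (adj ends T)\<^sup>*"
      using rtrancl_trans[OF rtrancl_trans[OF xr roots_connected] adj_rtrancl_sym[OF ys]] by blast
  qed (rule V_nonempty)
qed

lemma connected_iff_roots_linked:
  assumes "T \<subseteq> E" "\<forall>S\<in>P. rooted S (T \<inter> PE S)"
  shows "connected_graph V T ends \<longleftrightarrow> (\<forall>u\<in>R. \<forall>v\<in>R. (u, v) \<in> (root_link roots (joined_pieces T))\<^sup>*)"
  using roots_linked_if_connected[OF assms(1)] connected_if_roots_linked[OF assms(2)] by blast

lemma spanning_tree_piecewise_rooted_forest:
  assumes "spanning_tree V E ends T"
  shows "piecewise_rooted_forest T"
  unfolding piecewise_rooted_forest_def
proof (intro conjI ballI)
  have T: "T \<subseteq> E" "acyclic_edges ends T" "connected_graph V T ends"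
    using assms unfolding spanning_tree_def by auto
  then show "T \<subseteq> E" by blast
  fix S assume S: "S \<in> P"
  show "acyclic_edges ends (T \<inter> PE S)"
    using acyclic_edges_mono[OF Int_lower1 T(2)] .
  show "rooted S (T \<inter> PE S)"
    unfolding rooted_def
  proof
    fix x assume x: "x \<in> PV S"
    obtain r where r: "r \<in> roots S"
      using roots_nonempty[OF S] by blast
    then have "(x, r) \<in> (adj ends T)\<^sup>*"
      using T(3) x PV_subset[OF S] roots_subset unfolding connected_graph_def by blast
    then show "\<exists>r\<in>roots S. (x, r) \<in> (adj ends (T \<inter> PE S))\<^sup>*"
      using reaches_root_in_piece[OF T(1) S x r] by blast
  qed
qed

text \<open>Counting edges piece by piece: a piecewise rooted forest has card V - 1 edges exactly
  when card R - 1 pieces have their two roots joined.\<close>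

lemma spanning_tree_iff_root_tree:
  assumes "piecewise_rooted_forest T"
  shows "spanning_tree V E ends T \<longleftrightarrow> is_root_tree (joined_pieces T)"
proof -
  have T: "T \<subseteq> E" and rooted: "\<forall>S\<in>P. rooted S (T \<inter> PE S)"
    using assms unfolding piecewise_rooted_forest_def by auto
  have "finite T"
    using finite_subset[OF T finite_E] .
  then have rank: "card V \<le> card (components V ends T) + card T \<and>
      (acyclic_edges ends T \<longleftrightarrow> card V = card (components V ends T) + card T)"
    using card_components_plus_edges[OF _ finite_V] graph T unfolding graph_def by blast
  have count: "card T + card R = card V + card (joined_pieces T)"
    by (rule card_piecewise_rooted_forest[OF assms])
  have "1 \<le> card R"
    using R_nonempty finite_subset[OF R_subset finite_V] by (simp add: Suc_le_eq card_gt_0_iff)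
  moreover have "joined_pieces T \<subseteq> {S \<in> P. card (roots S) = 2}"
    unfolding joined_pieces_def by blast
  moreover have "card (components V ends T) = 1" if "connected_graph V T ends"
    using that by (rule card_components_connected)
  ultimately show ?thesis
    unfolding spanning_tree_def root_tree_def connected_iff_roots_linked[OF T rooted, symmetric]
    using T rank count by auto
qed

lemma piece_spanning_tree_iff:
  assumes "S \<in> P"
  shows "spanning_tree (PV S) (PE S) ends F \<longleftrightarrow>
    F \<subseteq> PE S \<and> acyclic_edges ends F \<and> rooted S F \<and> roots_joined S F"
proof -
  have "connected_graph (PV S) F ends \<longleftrightarrow> rooted S F \<and> roots_joined S F"
  proof
    assume "connected_graph (PV S) F ends"
    then have conn: "\<And>x y. x \<in> PV S \<Longrightarrow> y \<in> PV S \<Longrightarrow> (x, y) \<in> (adj ends F)\<^sup>*"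
      unfolding connected_graph_def by blast
    obtain r where "r \<in> roots S"
      using roots_nonempty[OF assms] by blast
    then show "rooted S F \<and> roots_joined S F"
      unfolding rooted_def roots_joined_def using conn roots_subset by blast
  next
    assume F: "rooted S F \<and> roots_joined S F"
    have "(x, y) \<in> (adj ends F)\<^sup>*" if xy: "x \<in> PV S" "y \<in> PV S" for x y
    proof -
      obtain r s where "r \<in> roots S" "s \<in> roots S"
        and xr: "(x, r) \<in> (adj ends F)\<^sup>*" and ys: "(y, s) \<in> (adj ends F)\<^sup>*"
        using F xy unfolding rooted_def by meson
      then have "(r, s) \<in> (adj ends F)\<^sup>*"
        using F unfolding roots_joined_def by blast
      then show ?thesis
        using rtrancl_trans[OF rtrancl_trans[OF xr] adj_rtrancl_sym[OF ys]] by blast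
    qed
    moreover have "PV S \<noteq> {}"
      using roots_nonempty[OF assms] roots_subset by blast
    ultimately show "connected_graph (PV S) F ends"
      unfolding connected_graph_def by blast
  qed
  then show ?thesis
    unfolding spanning_tree_def by blast
qed

lemma rooted_separated_if_one_root_each:
  assumes "S \<in> P" and one: "\<forall>x\<in>PV S. card (component_of (PV S) ends F x \<inter> R) = 1"
  shows "rooted S F" "roots_separated S F"
proof -
  let ?C = "component_of (PV S) ends F"
  show "rooted S F"
    unfolding rooted_def
  proof
    fix x assume "x \<in> PV S"
    then obtain r where "?C x \<inter> R = {r}"
      using one card_1_singletonE by metis
    then show "\<exists>r\<in>roots S. (x, r) \<in> (adj ends F)\<^sup>*"
      unfolding component_of_def roots_def by blast
  qed
  show "roots_separated S F"
    unfolding roots_separated_def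
  proof (intro ballI impI notI)
    fix u v assume uv: "u \<in> roots S" "v \<in> roots S" "u \<noteq> v" "(u, v) \<in> (adj ends F)\<^sup>*"
    then have "{u, v} \<subseteq> ?C u \<inter> R"
      unfolding component_of_def roots_def by auto
    moreover have "finite (?C u \<inter> R)"
      using finite_PV[OF assms(1)] unfolding component_of_def by simp
    ultimately have "card {u, v} \<le> card (?C u \<inter> R)"
      by (rule card_mono[rotated])
    moreover have "u \<in> PV S"
      using uv(1) roots_subset by blast
    ultimately show False
      using one uv(3) by simp
  qed
qed

lemma one_root_each_if_rooted_separated:
  assumes rooted: "rooted S F" and sep: "roots_separated S F" and "x \<in> PV S"
  shows "card (component_of (PV S) ends F x \<inter> R) = 1"
proof -
  let ?C = "component_of (PV S) ends F"
  obtain r where r: "r \<in> roots S" and xr: "(x, r) \<in> (adj ends F)\<^sup>*"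
    using rooted \<open>x \<in> PV S\<close> unfolding rooted_def by blast
  have "r' = r" if "r' \<in> ?C x \<inter> R" for r'
  proof -
    have "r' \<in> roots S" and xr': "(x, r') \<in> (adj ends F)\<^sup>*"
      using that unfolding component_of_def roots_def by auto
    moreover have "(r, r') \<in> (adj ends F)\<^sup>*"
      using rtrancl_trans[OF adj_rtrancl_sym[OF xr] xr'] .
    ultimately show "r' = r"
      using sep r unfolding roots_separated_def by metis
  qed
  moreover have "r \<in> ?C x \<inter> R"
    using r xr roots_subset unfolding component_of_def roots_def by auto
  ultimately have "?C x \<inter> R = {r}"
    by blast
  then show ?thesis
    by simp
qed

lemma card_roots_if_joined_separated:
  assumes "S \<in> P" "roots_joined S F" "roots_separated S F"
  shows "card (roots S) = 1"
proof -
  obtain r where r: "r \<in> roots S"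
    using roots_nonempty[OF assms(1)] by blast
  have "u = r" if u: "u \<in> roots S" for u
  proof -
    have "(u, r) \<in> (adj ends F)\<^sup>*"
      using assms(2) u r unfolding roots_joined_def by blast
    then show "u = r"
      using assms(3) u r unfolding roots_separated_def by blast
  qed
  then have "roots S = {r}"
    using r by blast
  then show ?thesis by simp
qed

lemma piece_forest_iff:
  assumes "S \<in> P"
  shows "(F \<subseteq> PE S \<and> acyclic_edges ends F \<and> card (components (PV S) ends F) = card (roots S) \<and>
       (\<forall>C\<in>components (PV S) ends F. card (C \<inter> R) = 1)) \<longleftrightarrow>
    F \<subseteq> PE S \<and> acyclic_edges ends F \<and> rooted S F \<and> roots_separated S F"
proof -
  have one_root: "(\<forall>C\<in>components (PV S) ends F. card (C \<inter> R) = 1) \<longleftrightarrow>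
      (\<forall>x\<in>PV S. card (component_of (PV S) ends F x \<inter> R) = 1)"
    by (simp add: components_eq_image)
  have "card (components (PV S) ends F) = card (roots S)" if "rooted S F" "roots_separated S F"
    using card_components_rooted[OF assms that(1)]
      card_roots_if_joined_separated[OF assms _ that(2)] by simp
  then show ?thesis
    unfolding one_root
    using rooted_separated_if_one_root_each[OF assms] one_root_each_if_rooted_separated by blast
qed

lemma card_piece_choices:
  assumes "S \<in> P"
  shows "card (piece_choices I S) = (if S \<in> I then kappa (PV S) (PE S) ends
      else F_forests (PV S) (PE S) ends R (card (roots S)))"
proof (cases "S \<in> I")
  case True
  then have "piece_choices I S = {F. spanning_tree (PV S) (PE S) ends F}"
    unfolding piece_choices_def piece_spanning_tree_iff[OF assms] by auto
  then show ?thesis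
    using True unfolding kappa_def by simp
next
  case False
  then have "piece_choices I S = {F. F \<subseteq> PE S \<and> acyclic_edges ends F \<and>
      card (components (PV S) ends F) = card (roots S) \<and>
      (\<forall>C\<in>components (PV S) ends F. card (C \<inter> R) = 1)}"
    unfolding piece_choices_def piece_forest_iff[OF assms] by auto
  then show ?thesis
    using False unfolding F_forests_def by simp
qed

definition glued_trees :: "'i set \<Rightarrow> 'e set set" where
  "glued_trees I = {T. T \<subseteq> E \<and> (\<forall>S\<in>P. T \<inter> PE S \<in> piece_choices I S)}"

lemma glue_pieces:
  assumes "\<And>S. S \<in> P \<Longrightarrow> g S \<subseteq> PE S"
  shows "(\<Union>S\<in>P. g S) \<subseteq> E" "\<And>S. S \<in> P \<Longrightarrow> (\<Union>S'\<in>P. g S') \<inter> PE S = g S"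
proof -
  show "(\<Union>S\<in>P. g S) \<subseteq> E"
    using assms PE_subset by blast
  fix S assume S: "S \<in> P"
  have "g S' \<inter> PE S = {}" if "S' \<in> P" "S' \<noteq> S" for S'
    using assms[OF that(1)] PE_disjoint[OF that(1) S that(2)] by blast
  then show "(\<Union>S'\<in>P. g S') \<inter> PE S = g S"
    using assms[OF S] S by blast
qed

lemma card_glued_trees: "card (glued_trees I) = (\<Prod>S\<in>P. card (piece_choices I S))"
proof -
  have "bij_betw (\<lambda>T. \<lambda>S\<in>P. T \<inter> PE S) (glued_trees I) (\<Pi>\<^sub>E S\<in>P. piece_choices I S)"
  proof (rule bij_betwI')
    fix T T' assume "T \<in> glued_trees I" "T' \<in> glued_trees I"
    then have "T \<subseteq> E" "T' \<subseteq> E"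
      unfolding glued_trees_def by auto
    then show "((\<lambda>S\<in>P. T \<inter> PE S) = (\<lambda>S\<in>P. T' \<inter> PE S)) \<longleftrightarrow> T = T'"
      using PE_cover by (auto simp: restrict_def fun_eq_iff)
  next
    fix T assume "T \<in> glued_trees I"
    then show "(\<lambda>S\<in>P. T \<inter> PE S) \<in> (\<Pi>\<^sub>E S\<in>P. piece_choices I S)"
      unfolding glued_trees_def by auto
  next
    fix g assume g: "g \<in> (\<Pi>\<^sub>E S\<in>P. piece_choices I S)"
    then have "\<And>S. S \<in> P \<Longrightarrow> g S \<subseteq> PE S"
      unfolding piece_choices_def by auto
    note glued = glue_pieces[OF this]
    then have "(\<Union>S\<in>P. g S) \<in> glued_trees I"
      using g unfolding glued_trees_def by auto
    moreover have "g = (\<lambda>S\<in>P. (\<Union>S'\<in>P. g S') \<inter> PE S)"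
      using g glued(2) by (auto simp: PiE_def extensional_def restrict_def fun_eq_iff)
    ultimately show "\<exists>T\<in>glued_trees I. g = (\<lambda>S\<in>P. T \<inter> PE S)"
      by blast
  qed
  then show ?thesis
    using bij_betw_same_card card_PiE[OF finite_P] by metis
qed

lemma glued_tree_spanning:
  assumes "is_root_tree I" "T \<in> glued_trees I"
  shows "spanning_tree V E ends T" "joined_pieces T = I"
proof -
  have T: "T \<subseteq> E" and choice: "\<And>S. S \<in> P \<Longrightarrow> T \<inter> PE S \<in> piece_choices I S"
    using assms(2) unfolding glued_trees_def by auto
  have I: "I \<subseteq> {S \<in> P. card (roots S) = 2}"
    using assms(1) unfolding root_tree_def by blast
  show "joined_pieces T = I"
  proof (intro equalityI subsetI)
    fix S assume "S \<in> joined_pieces T"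
    then have "S \<in> P" "card (roots S) = 2" "roots_joined S (T \<inter> PE S)"
      unfolding joined_pieces_def by auto
    moreover obtain u v where "roots S = {u, v}" "u \<noteq> v"
      using \<open>card (roots S) = 2\<close> card_2_iff by metis
    ultimately show "S \<in> I"
      using choice[of S] unfolding piece_choices_def roots_joined_def roots_separated_def
      by (cases "S \<in> I") auto
  next
    fix S assume "S \<in> I"
    then show "S \<in> joined_pieces T"
      using I choice unfolding joined_pieces_def piece_choices_def by auto
  qed
  moreover have "piecewise_rooted_forest T"
    using T choice unfolding piecewise_rooted_forest_def piece_choices_def by blast
  ultimately show "spanning_tree V E ends T"
    using spanning_tree_iff_root_tree assms(1) by simp
qed

lemma spanning_tree_glued:
  assumes "spanning_tree V E ends T"
  shows "is_root_tree (joined_pieces T)" "T \<in> glued_trees (joined_pieces T)"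
proof -
  have forest: "piecewise_rooted_forest T"
    by (rule spanning_tree_piecewise_rooted_forest[OF assms])
  then show "is_root_tree (joined_pieces T)"
    using spanning_tree_iff_root_tree assms by blast
  have "T \<inter> PE S \<in> piece_choices (joined_pieces T) S" if S: "S \<in> P" for S
  proof -
    have "S \<notin> joined_pieces T \<Longrightarrow> roots_separated S (T \<inter> PE S)"
      using roots_separated_unless_joined[OF S] S unfolding joined_pieces_def by blast
    moreover have "S \<in> joined_pieces T \<Longrightarrow> roots_joined S (T \<inter> PE S)"
      unfolding joined_pieces_def by blast
    ultimately show ?thesis
      using forest S unfolding piecewise_rooted_forest_def piece_choices_def by auto
  qed
  then show "T \<in> glued_trees (joined_pieces T)"
    using forest unfolding glued_trees_def piecewise_rooted_forest_def by blast
qed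

theorem kappa_eq_sum_root_trees:
  "kappa V E ends = (\<Sum>I\<in>{I. is_root_tree I}.
      (\<Prod>S\<in>I. kappa (PV S) (PE S) ends) * (\<Prod>S\<in>P - I. F_forests (PV S) (PE S) ends R (card (roots S))))"
proof -
  have spanning_trees: "{T. spanning_tree V E ends T} = (\<Union>I\<in>{I. is_root_tree I}. glued_trees I)"
    using spanning_tree_glued glued_tree_spanning by blast
  have "finite {I. is_root_tree I}"
    using finite_P unfolding root_tree_def by (auto intro: finite_subset[of _ "Pow P"])
  moreover have "finite (glued_trees I)" for I
    using finite_E unfolding glued_trees_def by (auto intro: finite_subset[of _ "Pow E"])
  moreover have "glued_trees I \<inter> glued_trees J = {}"
    if "is_root_tree I" "is_root_tree J" "I \<noteq> J" for I J
    using glued_tree_spanning(2) that by blast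
  ultimately have "kappa V E ends = (\<Sum>I\<in>{I. is_root_tree I}. card (glued_trees I))"
    unfolding kappa_def spanning_trees by (intro card_UN_disjoint) auto
  also have "\<dots> = (\<Sum>I\<in>{I. is_root_tree I}.
      (\<Prod>S\<in>I. kappa (PV S) (PE S) ends) * (\<Prod>S\<in>P - I. F_forests (PV S) (PE S) ends R (card (roots S))))"
  proof (rule sum.cong[OF refl])
    fix I assume "I \<in> {I. is_root_tree I}"
    then have "I \<subseteq> P"
      unfolding root_tree_def by blast
    have "card (glued_trees I) =
        (\<Prod>S\<in>P - I. card (piece_choices I S)) * (\<Prod>S\<in>I. card (piece_choices I S))"
      unfolding card_glued_trees using prod.subset_diff[OF \<open>I \<subseteq> P\<close> finite_P] .
    also have "\<dots> = (\<Prod>S\<in>P - I. F_forests (PV S) (PE S) ends R (card (roots S))) *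
        (\<Prod>S\<in>I. kappa (PV S) (PE S) ends)"
      using card_piece_choices \<open>I \<subseteq> P\<close> by (intro arg_cong2[where f = "(*)"] prod.cong) auto
    finally show "card (glued_trees I) = (\<Prod>S\<in>I. kappa (PV S) (PE S) ends) *
        (\<Prod>S\<in>P - I. F_forests (PV S) (PE S) ends R (card (roots S)))"
      by simp
  qed
  finally show ?thesis .
qed

lemma root_tree_if_restrictions_spanning:
  assumes "spanning_tree V E ends T" "I \<subseteq> {S \<in> P. card (roots S) = 2}" "card I = card R - 1"
    and restrictions: "\<forall>S\<in>I. spanning_tree (PV S) (PE S) ends (T \<inter> PE S)"
  shows "is_root_tree I"
proof -
  have J: "is_root_tree (joined_pieces T)"
    by (rule spanning_tree_glued(1)[OF assms(1)])
  have "I \<subseteq> joined_pieces T"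
    using assms(2) restrictions piece_spanning_tree_iff unfolding joined_pieces_def by blast
  moreover have "finite (joined_pieces T)"
    using finite_P unfolding joined_pieces_def by simp
  moreover have "card (joined_pieces T) = card I"
    using J assms(3) unfolding root_tree_def by simp
  ultimately have "I = joined_pieces T"
    by (simp add: card_subset_eq)
  then show ?thesis
    using J by simp
qed

lemma piece_choices_nonempty:
  assumes "S \<in> P" and connected: "connected_graph (PV S) (PE S) ends"
  shows "piece_choices I S \<noteq> {}"
proof (cases "S \<in> I")
  case True
  have "finite (PE S)"
    using finite_subset[OF PE_subset[OF assms(1)] finite_E] .
  then obtain F where "spanning_tree (PV S) (PE S) ends F"
    using connected by (rule connected_graph_spanning_tree)
  then have "F \<in> piece_choices I S"
    using True piece_spanning_tree_iff[OF assms(1)] unfolding piece_choices_def by simp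
  then show ?thesis by blast
next
  case False
  have "finite (PE S)"
    using finite_subset[OF PE_subset[OF assms(1)] finite_E] .
  obtain h where h: "h \<in> roots S"
    using roots_nonempty[OF assms(1)] by blast
  then have "\<forall>x\<in>PV S. (x, h) \<in> (adj ends (PE S))\<^sup>*"
    using connected roots_subset unfolding connected_graph_def by (metis subsetD)
  then have "\<forall>x\<in>PV S. \<exists>r\<in>roots S. (x, r) \<in> (adj ends (PE S))\<^sup>*"
    using h by blast
  then obtain F where "F \<subseteq> PE S" "acyclic_edges ends F"
    "\<forall>x\<in>PV S. \<exists>r\<in>roots S. (x, r) \<in> (adj ends F)\<^sup>*"
    "\<forall>r\<in>roots S. \<forall>r'\<in>roots S. r \<noteq> r' \<longrightarrow> (r, r') \<notin> (adj ends F)\<^sup>*"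
    by (rule rooted_spanning_forest[OF \<open>finite (PE S)\<close>])
  then have "F \<in> piece_choices I S"
    using False unfolding piece_choices_def rooted_def roots_separated_def by simp
  then show ?thesis by blast
qed

lemma spanning_tree_with_restrictions_exists:
  assumes "is_root_tree I" and connected: "\<forall>S\<in>P. connected_graph (PV S) (PE S) ends"
  obtains T where "spanning_tree V E ends T" "\<forall>S\<in>I. spanning_tree (PV S) (PE S) ends (T \<inter> PE S)"
proof -
  have "card (piece_choices I S) \<noteq> 0" if "S \<in> P" for S
  proof -
    have "piece_choices I S \<subseteq> Pow (PE S)"
      unfolding piece_choices_def by blast
    then have "finite (piece_choices I S)"
      using finite_subset[OF PE_subset[OF that] finite_E] finite_subset by blast
    then show ?thesis
      using piece_choices_nonempty[OF that] connected that by simp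
  qed
  then have "card (glued_trees I) \<noteq> 0"
    unfolding card_glued_trees using finite_P by simp
  then obtain T where T: "T \<in> glued_trees I"
    by (metis card.empty ex_in_conv)
  have "spanning_tree (PV S) (PE S) ends (T \<inter> PE S)" if "S \<in> I" for S
  proof -
    have "S \<in> P"
      using assms(1) that unfolding root_tree_def by blast
    then show ?thesis
      using T that piece_spanning_tree_iff unfolding glued_trees_def piece_choices_def by auto
  qed
  then show ?thesis
    using that glued_tree_spanning(1)[OF assms(1) T] by blast
qed

end

section \<open>Segments\<close>

lemma walk_edges_subset: "is_walk E ends vs es \<Longrightarrow> set es \<subseteq> E"
  unfolding is_walk_def by (auto simp: in_set_conv_nth)

lemma walk_hd_last:
  assumes "is_walk E ends vs es"
  shows "hd vs = vs ! 0" "last vs = vs ! length es"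
proof -
  have "length vs = Suc (length es)"
    using assms unfolding is_walk_def by simp
  moreover from this have "vs \<noteq> []"
    by auto
  ultimately show "hd vs = vs ! 0" "last vs = vs ! length es"
    by (simp_all add: hd_conv_nth last_conv_nth)
qed

lemma joins_in_verts:
  assumes "e \<in> F" "joins ends e x y"
  shows "x \<in> verts ends F" "y \<in> verts ends F"
proof -
  have "fst (ends e) \<in> verts ends F" "snd (ends e) \<in> verts ends F"
    using assms(1) unfolding verts_def by simp_all
  then show "x \<in> verts ends F" "y \<in> verts ends F"
    using assms(2) unfolding joins_def by auto
qed

lemma walk_reaches:
  assumes "is_walk E ends vs es" "i \<le> length es"
  shows "(vs ! 0, vs ! i) \<in> (adj ends (set es))\<^sup>*"
  using assms(2)
proof (induction i)
  case (Suc i)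
  then have "i < length es" by simp
  then have "(vs ! i, vs ! Suc i) \<in> adj ends (set es)"
    using assms(1) joins_in_adj[of "es ! i" "set es" ends "vs ! i" "vs ! Suc i"]
    unfolding is_walk_def by auto
  with Suc show ?case by simp
qed simp

lemma walk_vertex_index:
  assumes "is_walk E ends vs es" "x \<in> verts ends (set es)"
  obtains i where "i \<le> length es" "x = vs ! i"
proof -
  obtain j where j: "j < length es" "x = fst (ends (es ! j)) \<or> x = snd (ends (es ! j))"
    using assms(2) unfolding verts_def by (auto simp: in_set_conv_nth)
  then consider "x = vs ! j" | "x = vs ! Suc j"
    using assms(1) unfolding is_walk_def joins_def by auto
  then show ?thesis
    using that[of j] that[of "Suc j"] j(1) by cases simp_all
qed

lemma walk_ends_in_verts:
  assumes "is_walk E ends vs es" "es \<noteq> []"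
  shows "hd vs \<in> verts ends (set es)" "last vs \<in> verts ends (set es)"
proof -
  have "vs ! i \<in> verts ends (set es)" "vs ! Suc i \<in> verts ends (set es)" if "i < length es" for i
    using assms(1) that joins_in_verts[of "es ! i" "set es" ends "vs ! i" "vs ! Suc i"]
    unfolding is_walk_def by auto
  from this[of 0] this[of "length es - 1"]
  show "hd vs \<in> verts ends (set es)" "last vs \<in> verts ends (set es)"
    using assms walk_hd_last[OF assms(1)] by auto
qed

lemma admissible_walk_vertex:
  assumes "is_walk E ends vs es" and interior: "\<forall>i. 0 < i \<and> i < length es \<longrightarrow> vs ! i \<notin> R"
    and "x \<in> verts ends (set es)"
  shows "(hd vs, x) \<in> (adj ends (set es))\<^sup>*" "x \<in> R \<Longrightarrow> x = hd vs \<or> x = last vs"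
proof -
  obtain i where i: "i \<le> length es" "x = vs ! i"
    using walk_vertex_index[OF assms(1,3)] .
  then show "(hd vs, x) \<in> (adj ends (set es))\<^sup>*"
    using walk_reaches[OF assms(1)] walk_hd_last[OF assms(1)] by simp
  show "x \<in> R \<Longrightarrow> x = hd vs \<or> x = last vs"
    using interior i walk_hd_last[OF assms(1)] by (metis le_neq_implies_less neq0_conv)
qed

text \<open>All walks of a group have the same set Q of end vertices; as the walks are admissible,
  Q is exactly the set of ramified vertices of the segment they span.\<close>

locale walk_group =
  fixes E :: "'e set" and ends :: "'e \<Rightarrow> 'v \<times> 'v" and R :: "'v set"
    and G :: "('v list \<times> 'e list) set" and Q :: "'v set"
  assumes walks: "\<And>B. B \<in> G \<Longrightarrow> is_walk E ends (fst B) (snd B) \<and> snd B \<noteq> [] \<and> path_ends B = Q \<and>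
      (\<forall>i. 0 < i \<and> i < length (snd B) \<longrightarrow> fst B ! i \<notin> R)"
begin

lemma edges_subset: "set (snd B) \<subseteq> group_edges G" if "B \<in> G"
  using that unfolding group_edges_def by blast

lemma verts_subset: "verts ends (set (snd B)) \<subseteq> verts ends (group_edges G)" if "B \<in> G"
  using edges_subset[OF that] unfolding verts_def by blast

lemma walk_vertex:
  assumes "B \<in> G" "x \<in> verts ends (set (snd B))"
  shows "(hd (fst B), x) \<in> (adj ends (group_edges G))\<^sup>*" "x \<in> R \<Longrightarrow> x \<in> Q"
  using admissible_walk_vertex[of E ends "fst B" "snd B" R x] walks[OF assms(1)] assms(2)
    adj_rtrancl_mono[OF edges_subset[OF assms(1)]] unfolding path_ends_def by auto

lemma ends_in_verts:
  assumes "A \<in> G"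
  shows "Q = {hd (fst A), last (fst A)}" "Q \<subseteq> verts ends (set (snd A))"
  using walks[OF assms] walk_ends_in_verts[of E ends "fst A" "snd A"]
  unfolding path_ends_def by auto

lemma reaches_hd:
  assumes "A \<in> G" "x \<in> verts ends (group_edges G)"
  shows "(x, hd (fst A)) \<in> (adj ends (group_edges G))\<^sup>*"
proof -
  obtain B where B: "B \<in> G" "x \<in> verts ends (set (snd B))"
    using assms(2) unfolding verts_def group_edges_def by blast
  have "hd (fst B) \<in> Q"
    using walks[OF B(1)] unfolding path_ends_def by blast
  then have "(hd (fst A), hd (fst B)) \<in> (adj ends (group_edges G))\<^sup>* \<or>
      (hd (fst B), hd (fst A)) \<in> (adj ends (group_edges G))\<^sup>*"
    using walk_vertex(1)[OF assms(1)] ends_in_verts[OF assms(1)] by auto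
  then show ?thesis
    using walk_vertex(1)[OF B] adj_rtrancl_sym by (metis rtrancl_trans)
qed

lemma segment:
  assumes "A \<in> G" "Q \<subseteq> R"
  shows "group_edges G \<subseteq> E" "R \<inter> verts ends (group_edges G) = Q"
    "connected_graph (verts ends (group_edges G)) (group_edges G) ends"
proof -
  show "group_edges G \<subseteq> E"
    using walks walk_edges_subset unfolding group_edges_def by blast
  show "R \<inter> verts ends (group_edges G) = Q"
  proof
    show "R \<inter> verts ends (group_edges G) \<subseteq> Q"
      using walk_vertex(2) unfolding verts_def group_edges_def by blast
    show "Q \<subseteq> R \<inter> verts ends (group_edges G)"
      using assms(2) ends_in_verts(2)[OF assms(1)] verts_subset[OF assms(1)] by blast
  qed
  show "connected_graph (verts ends (group_edges G)) (group_edges G) ends"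
    unfolding connected_graph_def
  proof (intro conjI ballI)
    show "verts ends (group_edges G) \<noteq> {}"
      using ends_in_verts[OF assms(1)] verts_subset[OF assms(1)] by blast
    fix x y assume "x \<in> verts ends (group_edges G)" "y \<in> verts ends (group_edges G)"
    then show "(x, y) \<in> (adj ends (group_edges G))\<^sup>*"
      using rtrancl_trans[OF reaches_hd adj_rtrancl_sym[OF reaches_hd]] assms(1) by blast
  qed
qed

end

lemma path_group_subset: "A \<in> Ps \<Longrightarrow> path_group Ps A \<subseteq> Ps"
  unfolding path_group_def share_rel_def by (auto elim: rtranclE)

lemma path_group_self: "A \<in> path_group Ps A"
  unfolding path_group_def by simp

lemma AP2_D:
  assumes "B \<in> AP2 E ends R"
  shows "is_walk E ends (fst B) (snd B)" "snd B \<noteq> []" "hd (fst B) \<in> R" "last (fst B) \<in> R"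
    "hd (fst B) \<noteq> last (fst B)" "\<forall>i. 0 < i \<and> i < length (snd B) \<longrightarrow> fst B ! i \<notin> R"
  using assms unfolding AP2_def by (cases B; simp)+

lemma AP1_D:
  assumes "B \<in> AP1 E ends R"
  shows "is_walk E ends (fst B) (snd B)" "snd B \<noteq> []" "hd (fst B) \<in> R" "last (fst B) = hd (fst B)"
    "\<forall>i. 0 < i \<and> i < length (snd B) \<longrightarrow> fst B ! i \<notin> R"
  using assms unfolding AP1_def APc_def by (cases B; simp)+

lemma seg2_properties:
  assumes sd: "segment_decomposition V E ends R" and "S \<in> seg2 E ends R"
  shows "S \<subseteq> E" "connected_graph (verts ends S) S ends" "card (R \<inter> verts ends S) = 2"
proof -
  obtain A where A: "A \<in> AP2 E ends R" and S_eq: "S = group_edges (path_group (AP2 E ends R) A)"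
    using assms(2) unfolding seg2_def by blast
  have "\<forall>A\<in>AP2 E ends R. \<forall>B\<in>path_group (AP2 E ends R) A. path_ends B = path_ends A"
    using sd unfolding segment_decomposition_def by (elim conjE)
  then have "\<forall>B\<in>path_group (AP2 E ends R) A. path_ends B = path_ends A"
    using A by blast
  then interpret walk_group E ends R "path_group (AP2 E ends R) A" "path_ends A"
    using path_group_subset[OF A] AP2_D(1,2,6) by unfold_locales blast
  have "path_ends A \<subseteq> R" "card (path_ends A) = 2"
    using AP2_D(3-5)[OF A] unfolding path_ends_def by auto
  then show "S \<subseteq> E" "connected_graph (verts ends S) S ends" "card (R \<inter> verts ends S) = 2"
    using segment[OF path_group_self] unfolding S_eq by simp_all
qed

lemma seg1_properties:
  assumes sd: "segment_decomposition V E ends R" and "S \<in> seg1 E ends R"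
  shows "S \<subseteq> E" "connected_graph (verts ends S) S ends" "card (R \<inter> verts ends S) = 1"
proof -
  obtain A where A: "A \<in> AP1 E ends R" and S_eq: "S = group_edges (path_group (AP1 E ends R) A)"
    using assms(2) unfolding seg1_def by blast
  have "\<forall>A\<in>AP1 E ends R. \<forall>B\<in>path_group (AP1 E ends R) A. hd (fst B) = hd (fst A)"
    using sd unfolding segment_decomposition_def by (elim conjE)
  then have "\<forall>B\<in>path_group (AP1 E ends R) A. path_ends B = {hd (fst A)}"
    using A path_group_subset[OF A] AP1_D(4) unfolding path_ends_def by fastforce
  then interpret walk_group E ends R "path_group (AP1 E ends R) A" "{hd (fst A)}"
    using path_group_subset[OF A] AP1_D(1,2,5) by unfold_locales blast
  have "{hd (fst A)} \<subseteq> R"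
    using AP1_D(3)[OF A] by simp
  then show "S \<subseteq> E" "connected_graph (verts ends S) S ends" "card (R \<inter> verts ends S) = 1"
    using segment[OF path_group_self] unfolding S_eq by simp_all
qed

lemma segment_properties:
  assumes sd: "segment_decomposition V E ends R" and S: "S \<in> segs E ends R"
  shows "S \<subseteq> E" "connected_graph (verts ends S) S ends"
    "card (R \<inter> verts ends S) = (if S \<in> seg2 E ends R then 2 else 1)"
proof -
  consider "S \<in> seg2 E ends R" | "S \<notin> seg2 E ends R" "S \<in> seg1 E ends R"
    using S unfolding segs_def by blast
  note cases = this
  show "S \<subseteq> E" "connected_graph (verts ends S) S ends"
    using cases by (cases; simp add: seg2_properties[OF sd] seg1_properties[OF sd])+
  show "card (R \<inter> verts ends S) = (if S \<in> seg2 E ends R then 2 else 1)"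
    using cases by cases (simp_all add: seg2_properties[OF sd] seg1_properties[OF sd])
qed

lemma piece_decomposition_segments:
  assumes "graph V E ends" "connected_graph V E ends" "R \<subseteq> V"
    and sd: "segment_decomposition V E ends R"
  shows "piece_decomposition V E ends R (segs E ends R) (\<lambda>S. S) (verts ends)"
proof -
  have disjoint: "\<forall>S\<in>segs E ends R. \<forall>S'\<in>segs E ends R. S \<noteq> S' \<longrightarrow>
      S \<inter> S' = {} \<and> verts ends S \<inter> verts ends S' \<subseteq> R"
    using sd unfolding segment_decomposition_def by (elim conjE)
  have cover_E: "\<Union>(segs E ends R) = E"
    using sd unfolding segment_decomposition_def by (elim conjE)
  have cover_V: "\<Union>(verts ends ` segs E ends R) = V"
    using sd unfolding segment_decomposition_def by (elim conjE)
  have "segs E ends R \<subseteq> Pow E"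
    using segment_properties(1)[OF sd] by blast
  then have "finite (segs E ends R)"
    using assms(1) unfolding graph_def by (meson finite_Pow_iff finite_subset)
  moreover have "card (R \<inter> verts ends S) \<in> {1, 2}" if "S \<in> segs E ends R" for S
    using segment_properties(3)[OF sd that] by simp
  moreover have "V \<noteq> {}"
    using assms(2) unfolding connected_graph_def by blast
  ultimately show ?thesis
    using assms(1,3) disjoint cover_E cover_V by unfold_locales (auto simp: verts_def)
qed

lemma two_root_segments:
  assumes "segment_decomposition V E ends R"
  shows "{S \<in> segs E ends R. card (R \<inter> verts ends S) = 2} = seg2 E ends R"
  using segment_properties(3)[OF assms] unfolding segs_def by (auto split: if_splits)

lemma admissible_iff_root_tree:
  assumes "graph V E ends" "connected_graph V E ends" "R \<subseteq> V"
    and sd: "segment_decomposition V E ends R"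
  shows "admissible V E ends R I \<longleftrightarrow> root_tree R (segs E ends R) (\<lambda>S. R \<inter> verts ends S) I"
proof -
  interpret piece_decomposition V E ends R "segs E ends R" "\<lambda>S. S" "verts ends"
    by (rule piece_decomposition_segments[OF assms])
  have roots: "(\<lambda>S. R \<inter> verts ends S) = roots"
    unfolding roots_def by simp
  have two_roots: "seg2 E ends R = {S \<in> segs E ends R. card (roots S) = 2}"
    unfolding two_root_segments[OF sd, symmetric] roots_def by simp
  show ?thesis
    unfolding roots
  proof
    assume "admissible V E ends R I"
    then obtain T where "I \<subseteq> seg2 E ends R" "card I = card R - 1" "spanning_tree V E ends T"
      "\<forall>S\<in>I. spanning_tree (verts ends S) S ends (T \<inter> S)"
      unfolding admissible_def by blast
    then show "is_root_tree I"
      using root_tree_if_restrictions_spanning[of T I] unfolding two_roots by blast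
  next
    assume "is_root_tree I"
    moreover have "\<forall>S\<in>segs E ends R. connected_graph (verts ends S) S ends"
      using segment_properties(2)[OF sd] by blast
    ultimately obtain T where "spanning_tree V E ends T"
      "\<forall>S\<in>I. spanning_tree (verts ends S) S ends (T \<inter> S)"
      by (rule spanning_tree_with_restrictions_exists)
    then show "admissible V E ends R I"
      using \<open>is_root_tree I\<close> unfolding admissible_def root_tree_def two_roots by blast
  qed
qed

section \<open>The layers of a cover totally ramified at R\<close>

lemma fst_cls [simp]: "fst (cls R p n v g) = v"
  unfolding cls_def by simp

lemma cls_ramified: "v \<in> R \<Longrightarrow> cls R p n v g = (v, 0)"
  unfolding cls_def by simp

lemma cls_in_cover_V:
  assumes "0 < p" "v \<in> V"
  shows "cls R p n v g \<in> cover_V V R p n"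
proof -
  have "cls R p n v g = cls R p n v (g mod p ^ n)"
    unfolding cls_def by simp
  then show ?thesis
    unfolding cover_V_def using assms by fastforce
qed

lemma fst_cover_V: "x \<in> cover_V V R p n \<Longrightarrow> fst x \<in> V"
  unfolding cover_V_def by auto

lemma finite_cover_V: "finite V \<Longrightarrow> finite (cover_V V R p n)"
proof -
  have "cover_V V R p n = (\<lambda>(v, g). cls R p n v g) ` (V \<times> {..<p ^ n})"
    unfolding cover_V_def by auto
  then show "finite V \<Longrightarrow> finite (cover_V V R p n)"
    by simp
qed

lemma cover_ends_apply:
  "cover_ends ends R \<alpha> p n (e, g) = (cls R p n (fst (ends e)) g, cls R p n (snd (ends e)) (g + \<alpha> e n))"
  unfolding cover_ends_def by simp

lemma ramified_cover_vertices:
  assumes "R \<subseteq> V" "0 < p"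
  shows "{x \<in> cover_V V R p n. fst x \<in> R \<inter> A} = (\<lambda>r. (r, 0)) ` (R \<inter> A)"
proof
  show "{x \<in> cover_V V R p n. fst x \<in> R \<inter> A} \<subseteq> (\<lambda>r. (r, 0)) ` (R \<inter> A)"
  proof
    fix x assume x: "x \<in> {x \<in> cover_V V R p n. fst x \<in> R \<inter> A}"
    then obtain v g where "x = cls R p n v g"
      unfolding cover_V_def by blast
    with x have "x = (fst x, 0)"
      using cls_ramified[of v R p n g] by simp
    moreover have "fst x \<in> R \<inter> A"
      using x by simp
    ultimately show "x \<in> (\<lambda>r. (r, 0)) ` (R \<inter> A)"
      by (rule rev_image_eqI[rotated])
  qed
  show "(\<lambda>r. (r, 0)) ` (R \<inter> A) \<subseteq> {x \<in> cover_V V R p n. fst x \<in> R \<inter> A}"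
  proof (rule image_subsetI)
    fix r assume "r \<in> R \<inter> A"
    then have "cls R p n r 0 = (r, 0)" "cls R p n r 0 \<in> cover_V V R p n"
      using cls_ramified cls_in_cover_V[OF assms(2), of r V R n 0] assms(1) by auto
    then show "(r, 0) \<in> {x \<in> cover_V V R p n. fst x \<in> R \<inter> A}"
      using \<open>r \<in> R \<inter> A\<close> by simp
  qed
qed

lemma F_forests_cong:
  assumes "W \<inter> Rv = W \<inter> Rv'"
  shows "F_forests W F ends Rv t = F_forests W F ends Rv' t"
proof -
  have "C \<inter> Rv = C \<inter> Rv'" if "C \<in> components W ends G" for C G
    using that assms unfolding components_def by blast
  then show ?thesis
    unfolding F_forests_def by (metis (no_types, lifting))
qed

context piece_decomposition
begin

lemma cover_roots:
  assumes "0 < p"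
  shows "{x \<in> cover_V V R p n. fst x \<in> R} \<inter> {x \<in> cover_V V R p n. fst x \<in> PV S} =
    (\<lambda>r. (r, 0)) ` roots S"
proof -
  have "{x \<in> cover_V V R p n. fst x \<in> R} \<inter> {x \<in> cover_V V R p n. fst x \<in> PV S} =
      {x \<in> cover_V V R p n. fst x \<in> R \<inter> PV S}"
    by blast
  then show ?thesis
    unfolding roots_def using ramified_cover_vertices[OF R_subset assms] by simp
qed

lemma piece_decomposition_cover:
  assumes "0 < p"
  shows "piece_decomposition (cover_V V R p n) (cover_E E p n) (cover_ends ends R \<alpha> p n)
    {x \<in> cover_V V R p n. fst x \<in> R} P (\<lambda>S. cover_E (PE S) p n)
    (\<lambda>S. {x \<in> cover_V V R p n. fst x \<in> PV S})"
proof
  have ends_in_cover: "cls R p n (fst (ends e)) g \<in> cover_V V R p n"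
    "cls R p n (snd (ends e)) g \<in> cover_V V R p n" if "e \<in> E" for e g
    using graph that unfolding graph_def by (auto intro!: cls_in_cover_V[OF assms])
  show "graph (cover_V V R p n) (cover_E E p n) (cover_ends ends R \<alpha> p n)"
    unfolding graph_def cover_E_def
    using finite_cover_V[OF finite_V] finite_E ends_in_cover by (auto simp: cover_ends_apply)
  obtain v where "v \<in> V"
    using V_nonempty by blast
  then show "cover_V V R p n \<noteq> {}"
    using cls_in_cover_V[OF assms, of v V R n 0] by blast
  show "finite P"
    by (rule finite_P)
  show "(\<Union>S\<in>P. cover_E (PE S) p n) = cover_E E p n"
    unfolding cover_E_def PE_cover[symmetric] Sigma_Union by simp
  show "(\<Union>S\<in>P. {x \<in> cover_V V R p n. fst x \<in> PV S}) = cover_V V R p n"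
  proof (intro equalityI subsetI)
    fix x assume "x \<in> cover_V V R p n"
    moreover from this obtain S where "S \<in> P" "fst x \<in> PV S"
      using fst_cover_V PV_cover by blast
    ultimately show "x \<in> (\<Union>S\<in>P. {x \<in> cover_V V R p n. fst x \<in> PV S})"
      by blast
  qed blast
  fix S S' assume "S \<in> P" "S' \<in> P"
  then show "S \<noteq> S' \<Longrightarrow> cover_E (PE S) p n \<inter> cover_E (PE S') p n = {}"
    unfolding cover_E_def using PE_disjoint by blast
  show "S \<noteq> S' \<Longrightarrow> {x \<in> cover_V V R p n. fst x \<in> PV S} \<inter> {x \<in> cover_V V R p n. fst x \<in> PV S'}
      \<subseteq> {x \<in> cover_V V R p n. fst x \<in> R}"
    using PV_overlap[OF \<open>S \<in> P\<close> \<open>S' \<in> P\<close>] by blast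
  have "{x \<in> cover_V V R p n. fst x \<in> R} \<inter> {x \<in> cover_V V R p n. fst x \<in> PV S} =
      (\<lambda>r. (r, 0::nat)) ` (R \<inter> PV S)"
    using cover_roots[OF assms] unfolding roots_def .
  then show "card ({x \<in> cover_V V R p n. fst x \<in> R} \<inter> {x \<in> cover_V V R p n. fst x \<in> PV S}) \<in> {1, 2}"
    using card_roots[OF \<open>S \<in> P\<close>] by (simp add: card_image inj_on_def)
  fix x assume "x \<in> cover_E (PE S) p n"
  then obtain e g where "x = (e, g)" "e \<in> PE S"
    unfolding cover_E_def by blast
  then show "fst (cover_ends ends R \<alpha> p n x) \<in> {x \<in> cover_V V R p n. fst x \<in> PV S} \<and>
      snd (cover_ends ends R \<alpha> p n x) \<in> {x \<in> cover_V V R p n. fst x \<in> PV S}"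
    using PE_ends[OF \<open>S \<in> P\<close>] PE_subset[OF \<open>S \<in> P\<close>] ends_in_cover
    by (auto simp: cover_ends_apply)
qed (auto)

theorem kappa_cover_eq_sum_root_trees:
  assumes "0 < p"
  shows "kappa (cover_V V R p n) (cover_E E p n) (cover_ends ends R \<alpha> p n) =
    (\<Sum>I\<in>{I. is_root_tree I}.
      (\<Prod>S\<in>I. kappa {x \<in> cover_V V R p n. fst x \<in> PV S} (cover_E (PE S) p n) (cover_ends ends R \<alpha> p n)) *
      (\<Prod>S\<in>P - I. F_forests {x \<in> cover_V V R p n. fst x \<in> PV S} (cover_E (PE S) p n)
          (cover_ends ends R \<alpha> p n) {x. fst x \<in> R} (card (roots S))))"
proof -
  let ?R = "{x \<in> cover_V V R p n. fst x \<in> R}"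
  let ?PV = "\<lambda>S. {x \<in> cover_V V R p n. fst x \<in> PV S}"
  interpret N: piece_decomposition "cover_V V R p n" "cover_E E p n" "cover_ends ends R \<alpha> p n" ?R P
      "\<lambda>S. cover_E (PE S) p n" ?PV
    by (rule piece_decomposition_cover[OF assms])
  define f :: "'v \<Rightarrow> 'v \<times> nat" where "f r = (r, 0)" for r
  have "inj f"
    unfolding f_def inj_def by simp
  have R_cover: "?R = f ` R"
    using ramified_cover_vertices[OF R_subset assms, of n UNIV] unfolding f_def by simp
  have roots_cover: "N.roots S = f ` roots S" for S
    unfolding N.roots_def f_def by (rule cover_roots[OF assms])
  have card_roots_cover: "card (N.roots S) = card (roots S)" for S
    unfolding roots_cover using \<open>inj f\<close> by (simp add: card_image inj_on_subset)
  have forests: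
    "F_forests (?PV S) (cover_E (PE S) p n) (cover_ends ends R \<alpha> p n) ?R (card (N.roots S)) =
     F_forests (?PV S) (cover_E (PE S) p n) (cover_ends ends R \<alpha> p n) {x. fst x \<in> R} (card (roots S))"
    for S
    unfolding card_roots_cover by (rule F_forests_cong) blast
  have "N.roots = (\<lambda>S. f ` roots S)"
    using roots_cover by blast
  then have "N.is_root_tree I \<longleftrightarrow> is_root_tree I" for I
    unfolding R_cover[symmetric] using root_tree_image[OF \<open>inj f\<close>] R_cover by metis
  then show ?thesis
    using N.kappa_eq_sum_root_trees unfolding forests by simp
qed

end

theorem theorem5p23:
  fixes V :: "'v set" and E :: "'e set" and ends :: "'e \<Rightarrow> 'v \<times> 'v"
    and R :: "'v set" and p :: nat and \<alpha> :: "'e \<Rightarrow> nat \<Rightarrow> nat" and n :: nat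
  assumes "graph V E ends"
    and "connected_graph V E ends"
    and "R \<subseteq> V"
    and "\<not> has_tail V E ends R"
    and "segment_decomposition V E ends R"
    and "prime p"
    and "\<forall>e\<in>E. zp_elem p (\<alpha> e)"
    and "\<forall>m. connected_graph (cover_V V R p m) (cover_E E p m) (cover_ends ends R \<alpha> p m)"
  shows "kappa (cover_V V R p n) (cover_E E p n) (cover_ends ends R \<alpha> p n) =
    (\<Sum>I\<in>{I. admissible V E ends R I}.
        (\<Prod>S\<in>I. kappa (seg_cover_V V ends R p n S) (cover_E S p n) (cover_ends ends R \<alpha> p n)) *
        (\<Prod>S\<in>segs E ends R - I.
            F_forests (seg_cover_V V ends R p n S) (cover_E S p n) (cover_ends ends R \<alpha> p n)
              {x. fst x \<in> R} (card (R \<inter> verts ends S))))"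
proof -
  interpret X: piece_decomposition V E ends R "segs E ends R" "\<lambda>S. S" "verts ends"
    by (rule piece_decomposition_segments[OF assms(1-3,5)])
  have roots: "X.roots = (\<lambda>S. R \<inter> verts ends S)"
    unfolding X.roots_def by simp
  have "{I. admissible V E ends R I} = {I. X.is_root_tree I}"
    using admissible_iff_root_tree[OF assms(1-3,5)] unfolding roots by blast
  moreover have "0 < p"
    using assms(6) prime_gt_0_nat by blast
  ultimately show ?thesis
    using X.kappa_cover_eq_sum_root_trees[of p n \<alpha>] unfolding seg_cover_V_def roots by simp
qed

end
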